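(* Let $I\subseteq\mathbf{H}_\mathrm{Mat}$ be the linear span of the elements $M-p(M)$, $M\in\mathrm{Mat}$. Then $I$ is a biideal of the bialgebra $(\mathbf{H}_\mathrm{Mat},\searrow,\blacktriangle)$, and the quotient bialgebra $\mathbf{H}_\mathrm{Mat}/I$ is a Hopf algebra, graded (and connected) by the weight. Moreover $\mathbf{H}_\mathrm{Mat}/I$ has as a basis the classes of packed matrices, and, identifying it with $\mathbf{H}_\mathrm{Pack}$, its product is $M\searrow M'$ (block diagonal) and its coproduct is $\blacktriangle(M)=\sum_{M',M''\in\mathcal{M}_{k,l}(\mathbb{N}),\ M=M'+M''}p(M')\otimes p(M'')$ for $M\in\mathrm{Pack}$ with $k$ rows and $l$ columns.
   Context: $\mathcal{M}_{k,l}(\mathbb{N})$ is the set of $k\times l$ matrices with entries in $\mathbb{N}$. $\mathrm{Mat}=\{1\}\cup\bigcup_{k,l\geq1}\mathcal{M}_{k,l}(\mathbb{N})$, where $1$ is the empty matrix ($0$ rows, $0$ columns); $\mathbf{H}_\mathrm{Mat}$ is the $\mathbb{Q}$-vector space with basis $\mathrm{Mat}$. The weight $\omega(M)$ is the sum of the entries of $M$ ($\omega(1)=0$). For $M,M'\in\mathrm{Mat}$, $M\searrow M'=\begin{pmatrix}M&0\\0&M'\end{pmatrix}$ (block diagonal; $1$ is the unit). The coproduct on $\mathbf{H}_\mathrm{Mat}$ is $\blacktriangle(1)=1\otimes 1$ and, for $M\in\mathcal{M}_{k,l}(\mathbb{N})$, $\blacktriangle(M)=\sum_{(M',M'')\in\mathcal{M}_{k,l}(\mathbb{N})^2,\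 M'+M''=M}M'\otimes M''$, with counit $\varepsilon(M)=1$ if $\omega(M)=0$ and $0$ otherwise; $(\mathbf{H}_\mathrm{Mat},\searrow,\blacktriangle)$ is a bialgebra. A packed matrix is an element of $\mathrm{Mat}$ with no zero row and no zero column (the empty matrix $1$ is packed); $\mathrm{Pack}$ denotes the set of packed matrices and $\mathbf{H}_\mathrm{Pack}$ the $\mathbb{Q}$-vector space with basis $\mathrm{Pack}$. For $M\in\mathrm{Mat}$, $p(M)\in\mathrm{Pack}$ is obtained by deleting the zero rows and zero columns of $M$ (so $p$ of a zero matrix is $1$). *)

theory Defs
  imports Complex_Main
begin

text \<open>A matrix is a triple (k, l, f): k rows, l columns, entries f i j for i < k, j < l
  (f vanishes outside this range). Either k, l >= 1, or k = l = 0 (the empty matrix 1).\<close>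

typedef mat = "{(k::nat, l::nat, f::nat \<Rightarrow> nat \<Rightarrow> nat).
   (k = 0 \<longleftrightarrow> l = 0) \<and> (\<forall>i j. (k \<le> i \<or> l \<le> j) \<longrightarrow> f i j = 0)}"
  by (rule exI[of _ "(0, 0, \<lambda>_ _. 0)"]) auto

definition rows :: "mat \<Rightarrow> nat" where "rows M = fst (Rep_mat M)"
definition cols :: "mat \<Rightarrow> nat" where "cols M = fst (snd (Rep_mat M))"
definition entry :: "mat \<Rightarrow> nat \<Rightarrow> nat \<Rightarrow> nat" where "entry M = snd (snd (Rep_mat M))"

definition emptyM :: mat where "emptyM = Abs_mat (0, 0, \<lambda>_ _. 0)"

definition weight :: "mat \<Rightarrow> nat" where
  "weight M = (\<Sum>i<rows M. \<Sum>j<cols M. entry M i j)"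

definition blockdiag :: "mat \<Rightarrow> mat \<Rightarrow> mat" where
  "blockdiag M N = Abs_mat (rows M + rows N, cols M + cols N,
     \<lambda>i j. if i < rows M \<and> j < cols M then entry M i j
           else if rows M \<le> i \<and> cols M \<le> j then entry N (i - rows M) (j - cols M) else 0)"

definition same_shape :: "mat \<Rightarrow> mat \<Rightarrow> bool" where
  "same_shape A B \<longleftrightarrow> rows A = rows B \<and> cols A = cols B"

text \<open>Entrywise sum (used for matrices of the same shape).\<close>
definition madd :: "mat \<Rightarrow> mat \<Rightarrow> mat" where
  "madd A B = Abs_mat (rows A, cols A, \<lambda>i j. entry A i j + entry B i j)"

definition packed :: "mat \<Rightarrow> bool" where
  "packed M \<longleftrightarrow> (\<forall>i<rows M. \<exists>j<cols M. entry M i j \<noteq> 0)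
              \<and> (\<forall>j<cols M. \<exists>i<rows M. entry M i j \<noteq> 0)"

definition pack :: "mat \<Rightarrow> mat" where
  "pack M = (let R = sorted_list_of_set {i. i < rows M \<and> (\<exists>j<cols M. entry M i j \<noteq> 0)};
                 C = sorted_list_of_set {j. j < cols M \<and> (\<exists>i<rows M. entry M i j \<noteq> 0)}
             in Abs_mat (length R, length C,
                  \<lambda>i j. if i < length R \<and> j < length C then entry M (R ! i) (C ! j) else 0))"

text \<open>Elements of H_Mat are finitely supported functions mat => rat (coefficients on the
  basis Mat); elements of H_Mat \<otimes> H_Mat are finitely supported functions on mat \<times> mat
  (the tensor product of free spaces is free on pairs of basis elements).\<close>

definition supp :: "('b \<Rightarrow> rat) \<Rightarrow> 'b set" where "supp x = {M. x M \<noteq> 0}"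

definition fin :: "('b \<Rightarrow> rat) \<Rightarrow> bool" where "fin x \<longleftrightarrow> finite (supp x)"

definition delta :: "'b \<Rightarrow> 'b \<Rightarrow> rat" where "delta M = (\<lambda>N. if N = M then 1 else 0)"

definition lspan :: "('b \<Rightarrow> rat) set \<Rightarrow> ('b \<Rightarrow> rat) set" where
  "lspan S = {v. \<exists>(n::nat) c w. (\<forall>i<n. w i \<in> S) \<and> v = (\<lambda>z. \<Sum>i<n. c i * w i z)}"

definition mult :: "(mat \<Rightarrow> rat) \<Rightarrow> (mat \<Rightarrow> rat) \<Rightarrow> (mat \<Rightarrow> rat)" where
  "mult x y = (\<lambda>N. \<Sum>M\<in>supp x. \<Sum>M'\<in>supp y. if blockdiag M M' = N then x M * y M' else 0)"

definition tens :: "(mat \<Rightarrow> rat) \<Rightarrow> (mat \<Rightarrow> rat) \<Rightarrow> (mat \<times> mat \<Rightarrow> rat)" where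
  "tens a b = (\<lambda>(A, B). a A * b B)"

text \<open>Coproduct: the coefficient of A \<otimes> B in \<blacktriangle>(x) is x(A + B) if A, B have the same shape.\<close>
definition cop :: "(mat \<Rightarrow> rat) \<Rightarrow> (mat \<times> mat \<Rightarrow> rat)" where
  "cop x = (\<lambda>(A, B). if same_shape A B then x (madd A B) else 0)"

definition counit :: "(mat \<Rightarrow> rat) \<Rightarrow> rat" where
  "counit x = (\<Sum>M\<in>supp x. if weight M = 0 then x M else 0)"

definition Iid :: "(mat \<Rightarrow> rat) set" where
  "Iid = lspan {(\<lambda>N. delta M N - delta (pack M) N) | M. True}"

definition Jid :: "(mat \<times> mat \<Rightarrow> rat) set" where
  "Jid = lspan {tens a b | a b. (a \<in> Iid \<and> fin b) \<or> (fin a \<and> b \<in> Iid)}"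

text \<open>m \<circ> (S \<otimes> id) \<circ> \<blacktriangle> and m \<circ> (id \<otimes> S) \<circ> \<blacktriangle>, for a linear map S on H_Mat.\<close>
definition convL :: "((mat \<Rightarrow> rat) \<Rightarrow> (mat \<Rightarrow> rat)) \<Rightarrow> (mat \<Rightarrow> rat) \<Rightarrow> (mat \<Rightarrow> rat)" where
  "convL S x = (\<lambda>N. \<Sum>AB\<in>supp (cop x). cop x AB * mult (S (delta (fst AB))) (delta (snd AB)) N)"

definition convR :: "((mat \<Rightarrow> rat) \<Rightarrow> (mat \<Rightarrow> rat)) \<Rightarrow> (mat \<Rightarrow> rat) \<Rightarrow> (mat \<Rightarrow> rat)" where
  "convR S x = (\<lambda>N. \<Sum>AB\<in>supp (cop x). cop x AB * mult (delta (fst AB)) (S (delta (snd AB))) N)"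

definition linear_map :: "((mat \<Rightarrow> rat) \<Rightarrow> (mat \<Rightarrow> rat)) \<Rightarrow> bool" where
  "linear_map S \<longleftrightarrow> (\<forall>x. fin x \<longrightarrow> fin (S x)) \<and>
     (\<forall>a b x y. fin x \<longrightarrow> fin y \<longrightarrow>
        S (\<lambda>N. a * x N + b * y N) = (\<lambda>N. a * S x N + b * S y N))"

definition homog :: "nat \<Rightarrow> (mat \<Rightarrow> rat) \<Rightarrow> bool" where
  "homog n x \<longleftrightarrow> (\<forall>M. x M \<noteq> 0 \<longrightarrow> weight M = n)"

definition hpart :: "nat \<Rightarrow> (mat \<Rightarrow> rat) \<Rightarrow> (mat \<Rightarrow> rat)" where
  "hpart n x = (\<lambda>M. if weight M = n then x M else 0)"

end

theory Submission
  imports Defs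
begin

text \<open>Packing \<open>M \<mapsto> p(M)\<close> extends to a linear map \<open>\<Phi>\<close> onto the span of packed matrices,
  and \<open>I\<close> is its kernel. Since \<open>p(M \<searrow> N) = p(M) \<searrow> p(N)\<close>, \<open>p\<close> preserves the weight, and the
  splittings \<open>M = A + B\<close> of \<open>M\<close> correspond to those of \<open>p(M)\<close> (restrict to the nonzero rows and
  columns of \<open>M\<close>) without changing \<open>p(A)\<close> and \<open>p(B)\<close>, the ideal \<open>I\<close> is a homogeneous biideal and
  the quotient is \<open>H\<^sub>P\<^sub>a\<^sub>c\<^sub>k\<close> with the stated product and coproduct.

  The antipode is Takeuchi's \<open>S(M) = \<Sum> (-1)\<^sup>k X\<^sub>1 \<searrow> \<dots> \<searrow> X\<^sub>k\<close>, summed over the ordered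
  decompositions \<open>M = X\<^sub>1 + \<dots> + X\<^sub>k\<close> into nonzero matrices. In \<open>m \<circ> (S \<otimes> id) \<circ> \<blacktriangle>(M)\<close>
  the terms \<open>S(A) \<otimes> B\<close> with \<open>B \<noteq> 0\<close> cancel, by appending \<open>B\<close> as last part, against the terms
  of \<open>S(M)\<close> with at least one part, while the term with \<open>B = 0\<close> equals \<open>S(M)\<close> up to zero rows and
  columns, i.e. modulo \<open>I\<close>; what remains is \<open>\<epsilon>(M) 1\<close>. The same correspondence of
  decompositions shows that \<open>S(M)\<close> and \<open>S(p(M))\<close> agree modulo \<open>I\<close>, so \<open>S\<close> preserves \<open>I\<close>.\<close>

section \<open>Matrices\<close>

lemma mat_wf: "(rows M = 0 \<longleftrightarrow> cols M = 0) \<and> (\<forall>i j. rows M \<le> i \<or> cols M \<le> j \<longrightarrow> entry M i j = 0)"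
  using Rep_mat[of M] by (auto simp: rows_def cols_def entry_def split: prod.splits)

lemma rows_eq_0_iff: "rows M = 0 \<longleftrightarrow> cols M = 0"
  using mat_wf by blast

lemma entry_eq_0_outside: "rows M \<le> i \<or> cols M \<le> j \<Longrightarrow> entry M i j = 0"
  using mat_wf by blast

lemma entry_nonzero_bounds: "entry M i j \<noteq> 0 \<Longrightarrow> i < rows M \<and> j < cols M"
  using entry_eq_0_outside[of M i j] by (meson not_le)

lemma mat_eqI:
  assumes "rows A = rows B" "cols A = cols B"
    and "\<And>i j. i < rows A \<Longrightarrow> j < cols A \<Longrightarrow> entry A i j = entry B i j"
  shows "A = B"
proof -
  have "entry A = entry B"
    using assms entry_eq_0_outside[of A] entry_eq_0_outside[of B] by (metis ext not_le)
  then have "Rep_mat A = Rep_mat B"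
    using assms by (simp add: rows_def cols_def entry_def prod_eq_iff)
  then show ?thesis by (simp add: Rep_mat_inject)
qed

lemma Abs_mat_parts:
  assumes "k = 0 \<longleftrightarrow> l = 0" "\<forall>i j. k \<le> i \<or> l \<le> j \<longrightarrow> f i j = 0"
  shows "rows (Abs_mat (k, l, f)) = k" "cols (Abs_mat (k, l, f)) = l" "entry (Abs_mat (k, l, f)) = f"
  using Abs_mat_inverse[of "(k, l, f)"] assms by (auto simp: rows_def cols_def entry_def)

definition mk_mat :: "nat \<Rightarrow> nat \<Rightarrow> (nat \<Rightarrow> nat \<Rightarrow> nat) \<Rightarrow> mat" where
  "mk_mat k l f = Abs_mat (k, l, \<lambda>i j. if i < k \<and> j < l then f i j else 0)"

lemma mk_mat_parts:
  assumes "k = 0 \<longleftrightarrow> l = 0"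
  shows "rows (mk_mat k l f) = k" "cols (mk_mat k l f) = l"
    "entry (mk_mat k l f) i j = (if i < k \<and> j < l then f i j else 0)"
  using Abs_mat_parts[of k l "\<lambda>i j. if i < k \<and> j < l then f i j else 0"] assms
  by (auto simp: mk_mat_def)

lemma emptyM_parts [simp]: "rows emptyM = 0" "cols emptyM = 0" "entry emptyM i j = 0"
  using Abs_mat_parts[of 0 0 "\<lambda>_ _. 0"] by (auto simp: emptyM_def)

lemma blockdiag_parts:
  "rows (blockdiag M N) = rows M + rows N"
  "cols (blockdiag M N) = cols M + cols N"
  "entry (blockdiag M N) i j = (if i < rows M \<and> j < cols M then entry M i j
     else if rows M \<le> i \<and> cols M \<le> j then entry N (i - rows M) (j - cols M) else 0)"
proof -
  have "rows M + rows N = 0 \<longleftrightarrow> cols M + cols N = 0"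
    using rows_eq_0_iff[of M] rows_eq_0_iff[of N] by auto
  moreover have "\<forall>i j. rows M + rows N \<le> i \<or> cols M + cols N \<le> j \<longrightarrow>
      (if i < rows M \<and> j < cols M then entry M i j
       else if rows M \<le> i \<and> cols M \<le> j then entry N (i - rows M) (j - cols M) else 0) = 0"
    by (auto intro!: entry_eq_0_outside)
  ultimately show "rows (blockdiag M N) = rows M + rows N" "cols (blockdiag M N) = cols M + cols N"
    "entry (blockdiag M N) i j = (if i < rows M \<and> j < cols M then entry M i j
       else if rows M \<le> i \<and> cols M \<le> j then entry N (i - rows M) (j - cols M) else 0)"
    unfolding blockdiag_def by (simp_all add: Abs_mat_parts)
qed

lemma blockdiag_emptyM_left [simp]: "blockdiag emptyM M = M"
  by (rule mat_eqI) (auto simp: blockdiag_parts)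

lemma blockdiag_emptyM_right [simp]: "blockdiag M emptyM = M"
  by (rule mat_eqI) (auto simp: blockdiag_parts entry_eq_0_outside)

lemma blockdiag_assoc: "blockdiag (blockdiag A B) C = blockdiag A (blockdiag B C)"
  by (rule mat_eqI) (auto simp: blockdiag_parts entry_eq_0_outside)

lemma madd_parts:
  assumes "same_shape A B"
  shows "rows (madd A B) = rows A" "cols (madd A B) = cols A"
    "entry (madd A B) i j = entry A i j + entry B i j"
  using Abs_mat_parts[of "rows A" "cols A" "\<lambda>i j. entry A i j + entry B i j"] assms
    rows_eq_0_iff[of A] by (auto simp: madd_def same_shape_def entry_eq_0_outside)

lemma weight_eq_0_iff: "weight M = 0 \<longleftrightarrow> (\<forall>i j. entry M i j = 0)"
proof
  assume "weight M = 0"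
  then have "\<forall>i<rows M. \<forall>j<cols M. entry M i j = 0" by (simp add: weight_def)
  then show "\<forall>i j. entry M i j = 0" using entry_eq_0_outside by (metis not_le)
qed (simp add: weight_def)

lemma entry_le_weight: "entry M i j \<le> weight M"
proof (cases "i < rows M \<and> j < cols M")
  case True
  then have "entry M i j \<le> (\<Sum>j<cols M. entry M i j)" by (intro member_le_sum) auto
  also have "\<dots> \<le> weight M" unfolding weight_def using True by (intro member_le_sum) auto
  finally show ?thesis .
qed (auto simp: entry_eq_0_outside)

lemma weight_blockdiag: "weight (blockdiag A B) = weight A + weight B"
proof -
  have split: "(\<Sum>i<a + b. f i) = (\<Sum>i<a. f i) + (\<Sum>i<b. f (a + i))" for a b and f :: "nat \<Rightarrow> nat"
    by (induction b) auto
  show ?thesis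
    by (simp add: weight_def blockdiag_parts split entry_eq_0_outside)
qed

section \<open>Packing\<close>

definition nz_rows :: "mat \<Rightarrow> nat set" where
  "nz_rows M = {i. i < rows M \<and> (\<exists>j<cols M. entry M i j \<noteq> 0)}"

definition nz_cols :: "mat \<Rightarrow> nat set" where
  "nz_cols M = {j. j < cols M \<and> (\<exists>i<rows M. entry M i j \<noteq> 0)}"

definition row_list :: "mat \<Rightarrow> nat list" where
  "row_list M = sorted_list_of_set (nz_rows M)"

definition col_list :: "mat \<Rightarrow> nat list" where
  "col_list M = sorted_list_of_set (nz_cols M)"

lemma set_row_list [simp]: "set (row_list M) = nz_rows M"
  by (simp add: row_list_def nz_rows_def)

lemma set_col_list [simp]: "set (col_list M) = nz_cols M"
  by (simp add: col_list_def nz_cols_def)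

lemma sorted_row_list: "sorted_wrt (<) (row_list M)"
  by (simp add: row_list_def)

lemma sorted_col_list: "sorted_wrt (<) (col_list M)"
  by (simp add: col_list_def)

lemma row_list_eq_Nil_iff: "row_list M = [] \<longleftrightarrow> col_list M = []"
proof -
  have "nz_rows M = {} \<longleftrightarrow> nz_cols M = {}"
    by (auto simp: nz_rows_def nz_cols_def)
  then show ?thesis by (metis set_col_list set_empty set_row_list)
qed

lemma pack_eq_mk_mat:
  "pack M = mk_mat (length (row_list M)) (length (col_list M))
     (\<lambda>i j. entry M (row_list M ! i) (col_list M ! j))"
  by (simp add: pack_def mk_mat_def row_list_def col_list_def nz_rows_def nz_cols_def)

lemma pack_parts:
  "rows (pack M) = length (row_list M)" "cols (pack M) = length (col_list M)"
  "entry (pack M) i j = (if i < length (row_list M) \<and> j < length (col_list M)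
     then entry M (row_list M ! i) (col_list M ! j) else 0)"
  unfolding pack_eq_mk_mat using mk_mat_parts row_list_eq_Nil_iff[of M] by simp_all

lemma row_list_nth_less: "a < length (row_list M) \<Longrightarrow> row_list M ! a < rows M"
  using nth_mem[of a "row_list M"] by (auto simp: nz_rows_def)

lemma col_list_nth_less: "b < length (col_list M) \<Longrightarrow> col_list M ! b < cols M"
  using nth_mem[of b "col_list M"] by (auto simp: nz_cols_def)

lemma nonzero_in_nz_rows_cols: "entry M i j \<noteq> 0 \<Longrightarrow> i \<in> nz_rows M \<and> j \<in> nz_cols M"
  using entry_nonzero_bounds[of M i j] by (auto simp: nz_rows_def nz_cols_def)

lemma entry_eq_0_outside_nz: "i \<notin> nz_rows M \<or> j \<notin> nz_cols M \<Longrightarrow> entry M i j = 0"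
  using nonzero_in_nz_rows_cols by blast

lemma image_row_list: "(\<lambda>a. row_list M ! a) ` {..<length (row_list M)} = nz_rows M"
  by (metis set_row_list lessThan_atLeast0 atLeast_upt set_map map_nth)

lemma image_col_list: "(\<lambda>b. col_list M ! b) ` {..<length (col_list M)} = nz_cols M"
  by (metis set_col_list lessThan_atLeast0 atLeast_upt set_map map_nth)

lemma strict_mono_on_nth_sorted:
  "sorted_wrt (<) xs \<Longrightarrow> strict_mono_on {..<length xs} (\<lambda>a. xs ! a)"
  by (auto simp: strict_mono_on_def sorted_wrt_iff_nth_less)

text \<open>\<open>embeds P f g M\<close>: the matrix \<open>M\<close> arises from \<open>P\<close> by inserting zero rows and zero
  columns, row \<open>a\<close> and column \<open>b\<close> of \<open>P\<close> becoming row \<open>f a\<close> and column \<open>g b\<close> of \<open>M\<close>.\<close>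

definition embeds :: "mat \<Rightarrow> (nat \<Rightarrow> nat) \<Rightarrow> (nat \<Rightarrow> nat) \<Rightarrow> mat \<Rightarrow> bool" where
  "embeds P f g M \<longleftrightarrow> (\<forall>a<rows P. f a < rows M) \<and> (\<forall>b<cols P. g b < cols M)
     \<and> strict_mono_on {..<rows P} f \<and> strict_mono_on {..<cols P} g
     \<and> (\<forall>a<rows P. \<forall>b<cols P. entry M (f a) (g b) = entry P a b)
     \<and> (\<forall>i j. entry M i j \<noteq> 0 \<longrightarrow> i \<in> f ` {..<rows P} \<and> j \<in> g ` {..<cols P})"

lemma embeds_pack: "embeds (pack M) (\<lambda>a. row_list M ! a) (\<lambda>b. col_list M ! b) M"
  unfolding embeds_def pack_parts
  using row_list_nth_less col_list_nth_less nonzero_in_nz_rows_cols[of M]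
    strict_mono_on_nth_sorted[OF sorted_row_list] strict_mono_on_nth_sorted[OF sorted_col_list]
    image_row_list[of M] image_col_list[of M]
  by auto

lemma packed_pack: "packed (pack M)"
  unfolding packed_def
proof (intro conjI allI impI)
  fix a assume a: "a < rows (pack M)"
  then have "row_list M ! a \<in> nz_rows M" using nth_mem set_row_list by (metis pack_parts(1))
  then obtain j where "j < cols M" "entry M (row_list M ! a) j \<noteq> 0" by (auto simp: nz_rows_def)
  moreover from this obtain b where "b < length (col_list M)" "col_list M ! b = j"
    using nonzero_in_nz_rows_cols image_col_list by (metis imageE lessThan_iff)
  ultimately show "\<exists>b<cols (pack M). entry (pack M) a b \<noteq> 0" using a by (auto simp: pack_parts)
next
  fix b assume b: "b < cols (pack M)"
  then have "col_list M ! b \<in> nz_cols M" using nth_mem set_col_list by (metis pack_parts(2))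
  then obtain i where "i < rows M" "entry M i (col_list M ! b) \<noteq> 0" by (auto simp: nz_cols_def)
  moreover from this obtain a where "a < length (row_list M)" "row_list M ! a = i"
    using nonzero_in_nz_rows_cols image_row_list by (metis imageE lessThan_iff)
  ultimately show "\<exists>a<rows (pack M). entry (pack M) a b \<noteq> 0" using b by (auto simp: pack_parts)
qed

lemma sorted_list_of_set_strict_mono_image:
  assumes "strict_mono_on {..<n} f"
  shows "sorted_list_of_set (f ` {..<n}) = map f [0..<n]"
proof (rule strict_sorted_equal)
  show "sorted_wrt (<) (map f [0..<n])"
    using assms by (auto simp: sorted_wrt_iff_nth_less strict_mono_on_def)
qed auto

lemma pack_eq_if_embeds:
  assumes P: "packed P" and e: "embeds P f g M"
  shows "pack M = P"
proof -
  have "nz_rows M = f ` {..<rows P}"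
  proof
    show "nz_rows M \<subseteq> f ` {..<rows P}" using e by (auto simp: nz_rows_def embeds_def)
    show "f ` {..<rows P} \<subseteq> nz_rows M"
    proof
      fix i assume "i \<in> f ` {..<rows P}"
      then obtain a where a: "a < rows P" "i = f a" by auto
      then obtain b where "b < cols P" "entry P a b \<noteq> 0" using P by (auto simp: packed_def)
      then show "i \<in> nz_rows M" using a e by (auto simp: nz_rows_def embeds_def)
    qed
  qed
  then have rows: "row_list M = map f [0..<rows P]"
    using e by (simp add: row_list_def embeds_def sorted_list_of_set_strict_mono_image)
  have "nz_cols M = g ` {..<cols P}"
  proof
    show "nz_cols M \<subseteq> g ` {..<cols P}" using e by (auto simp: nz_cols_def embeds_def)
    show "g ` {..<cols P} \<subseteq> nz_cols M"
    proof
      fix j assume "j \<in> g ` {..<cols P}"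
      then obtain b where b: "b < cols P" "j = g b" by auto
      then obtain a where "a < rows P" "entry P a b \<noteq> 0" using P by (auto simp: packed_def)
      then show "j \<in> nz_cols M" using b e by (auto simp: nz_cols_def embeds_def)
    qed
  qed
  then have cols: "col_list M = map g [0..<cols P]"
    using e by (simp add: col_list_def embeds_def sorted_list_of_set_strict_mono_image)
  show ?thesis
    by (rule mat_eqI) (use e in \<open>auto simp: pack_parts rows cols embeds_def\<close>)
qed

lemma pack_packed: "packed P \<Longrightarrow> pack P = P"
  using pack_eq_if_embeds[of P id id] entry_nonzero_bounds[of P]
  by (fastforce simp: embeds_def strict_mono_on_def)

lemma pack_pack [simp]: "pack (pack M) = pack M"
  using pack_packed packed_pack by blast

lemma embeds_trans:
  assumes "embeds P f g M" and "embeds M f' g' N"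
  shows "embeds P (f' \<circ> f) (g' \<circ> g) N"
proof -
  have "i \<in> (f' \<circ> f) ` {..<rows P} \<and> j \<in> (g' \<circ> g) ` {..<cols P}" if "entry N i j \<noteq> 0" for i j
  proof -
    from assms(2) that have "i \<in> f' ` {..<rows M}" "j \<in> g' ` {..<cols M}"
      by (auto simp: embeds_def)
    then obtain a' b' where ab': "a' < rows M" "b' < cols M" "i = f' a'" "j = g' b'" by blast
    then have "entry M a' b' \<noteq> 0" using assms(2) that by (auto simp: embeds_def)
    then have "a' \<in> f ` {..<rows P}" "b' \<in> g ` {..<cols P}"
      using assms(1) by (auto simp: embeds_def)
    then obtain a b where "a < rows P" "b < cols P" "a' = f a" "b' = g b" by blast
    then show ?thesis using ab' by auto
  qed
  moreover have "strict_mono_on {..<rows P} (f' \<circ> f)" "strict_mono_on {..<cols P} (g' \<circ> g)"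
    using assms unfolding embeds_def strict_mono_on_def by (auto simp: lessThan_def)
  ultimately show ?thesis using assms by (auto simp: embeds_def)
qed

lemma pack_eq_pack_if_embeds: "embeds P f g M \<Longrightarrow> pack M = pack P"
  using pack_eq_if_embeds[OF packed_pack embeds_trans[OF embeds_pack]] by blast

lemma weight_eq_if_embeds:
  assumes e: "embeds P f g M"
  shows "weight M = weight P"
proof -
  have sub: "f ` {..<rows P} \<subseteq> {..<rows M}" "g ` {..<cols P} \<subseteq> {..<cols M}"
    using e by (auto simp: embeds_def)
  have "weight M = (\<Sum>i\<in>f ` {..<rows P}. \<Sum>j<cols M. entry M i j)"
    unfolding weight_def using e sub by (intro sum.mono_neutral_right) (auto simp: embeds_def)
  also have "\<dots> = (\<Sum>i\<in>f ` {..<rows P}. \<Sum>j\<in>g ` {..<cols P}. entry M i j)"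
    using e sub by (intro sum.cong sum.mono_neutral_right) (auto simp: embeds_def)
  also have "\<dots> = (\<Sum>a<rows P. \<Sum>b<cols P. entry M (f a) (g b))"
    using e by (simp add: sum.reindex strict_mono_on_imp_inj_on embeds_def)
  also have "\<dots> = weight P"
    using e by (simp add: weight_def embeds_def)
  finally show ?thesis .
qed

lemma weight_pack [simp]: "weight (pack M) = weight M"
  using weight_eq_if_embeds[OF embeds_pack] by simp

lemma pack_weight_0: "weight M = 0 \<Longrightarrow> pack M = emptyM"
  by (rule mat_eqI) (auto simp: pack_parts weight_eq_0_iff row_list_def nz_rows_def col_list_def nz_cols_def)

lemma pack_emptyM [simp]: "pack emptyM = emptyM"
  by (simp add: pack_weight_0 weight_eq_0_iff)

definition glue :: "nat \<Rightarrow> nat \<Rightarrow> (nat \<Rightarrow> nat) \<Rightarrow> (nat \<Rightarrow> nat) \<Rightarrow> nat \<Rightarrow> nat" where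
  "glue p m f f' a = (if a < p then f a else m + f' (a - p))"

lemma strict_mono_on_glue:
  assumes "strict_mono_on {..<p} f" "strict_mono_on {..<q} f'" "\<forall>a<p. f a < m"
  shows "strict_mono_on {..<p + q} (glue p m f f')"
proof (rule strict_mono_onI)
  fix a b assume "a \<in> {..<p + q}" "b \<in> {..<p + q}" "a < b"
  then show "glue p m f f' a < glue p m f f' b"
    using assms strict_mono_onD[OF assms(1), of a b] strict_mono_onD[OF assms(2), of "a - p" "b - p"]
    by (auto simp: glue_def less_diff_conv2 add.commute trans_less_add2)
qed

lemma nonzero_blockdiag_in_glue_image:
  assumes e1: "embeds P f g M" and e2: "embeds Q f' g' N" and nz: "entry (blockdiag M N) i j \<noteq> 0"
  shows "i \<in> glue (rows P) (rows M) f f' ` {..<rows P + rows Q}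
    \<and> j \<in> glue (cols P) (cols M) g g' ` {..<cols P + cols Q}"
proof (cases "i < rows M \<and> j < cols M")
  case True
  then have "i \<in> f ` {..<rows P}" "j \<in> g ` {..<cols P}"
    using nz e1 by (auto simp: embeds_def blockdiag_parts)
  then obtain a b where "a < rows P" "b < cols P" "i = f a" "j = g b" by blast
  then show ?thesis by (auto simp: glue_def intro!: image_eqI)
next
  case False
  then have ij: "rows M \<le> i" "cols M \<le> j" "entry N (i - rows M) (j - cols M) \<noteq> 0"
    using nz by (auto simp: blockdiag_parts split: if_splits)
  then have "i - rows M \<in> f' ` {..<rows Q}" "j - cols M \<in> g' ` {..<cols Q}"
    using e2 by (auto simp: embeds_def)
  then obtain a b where "a < rows Q" "b < cols Q" "i - rows M = f' a" "j - cols M = g' b"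
    by blast
  with ij show ?thesis
    by (auto simp: glue_def intro!: image_eqI[of i _ "rows P + a"] image_eqI[of j _ "cols P + b"])
qed

lemma entry_blockdiag_glue:
  assumes e1: "embeds P f g M" and e2: "embeds Q f' g' N"
    and a: "a < rows P + rows Q" and b: "b < cols P + cols Q"
  shows "entry (blockdiag M N) (glue (rows P) (rows M) f f' a) (glue (cols P) (cols M) g g' b)
    = entry (blockdiag P Q) a b"
proof -
  have row: "glue (rows P) (rows M) f f' a < rows M \<longleftrightarrow> a < rows P"
    using e1 by (auto simp: glue_def embeds_def)
  have col: "glue (cols P) (cols M) g g' b < cols M \<longleftrightarrow> b < cols P"
    using e1 by (auto simp: glue_def embeds_def)
  show ?thesis
  proof (cases "a < rows P \<and> b < cols P")
    case True
    then show ?thesis using e1 row col by (simp add: blockdiag_parts glue_def embeds_def)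
  next
    case False
    have "a - rows P < rows Q" "b - cols P < cols Q" if "\<not> a < rows P" "\<not> b < cols P"
      using a b that by auto
    then show ?thesis using False e2 row col
      by (auto simp: blockdiag_parts glue_def embeds_def not_less)
  qed
qed

lemma embeds_blockdiag:
  assumes e1: "embeds P f g M" and e2: "embeds Q f' g' N"
  shows "embeds (blockdiag P Q) (glue (rows P) (rows M) f f') (glue (cols P) (cols M) g g')
    (blockdiag M N)"
proof -
  have "strict_mono_on {..<rows P + rows Q} (glue (rows P) (rows M) f f')"
    "strict_mono_on {..<cols P + cols Q} (glue (cols P) (cols M) g g')"
    using e1 e2 strict_mono_on_glue by (auto simp: embeds_def)
  moreover have "\<forall>a<rows P + rows Q. glue (rows P) (rows M) f f' a < rows M + rows N"
    "\<forall>b<cols P + cols Q. glue (cols P) (cols M) g g' b < cols M + cols N"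
    using e1 e2 by (auto simp: embeds_def glue_def)
  ultimately show ?thesis
    using nonzero_blockdiag_in_glue_image[OF e1 e2] entry_blockdiag_glue[OF e1 e2]
    unfolding embeds_def blockdiag_parts(1,2) by blast
qed

lemma packed_blockdiag:
  assumes P: "packed P" and Q: "packed Q"
  shows "packed (blockdiag P Q)"
  unfolding packed_def blockdiag_parts(1,2)
proof (intro conjI allI impI)
  fix i assume i: "i < rows P + rows Q"
  show "\<exists>j<cols P + cols Q. entry (blockdiag P Q) i j \<noteq> 0"
  proof (cases "i < rows P")
    case True
    then obtain j where "j < cols P" "entry P i j \<noteq> 0" using P by (auto simp: packed_def)
    then show ?thesis using True by (intro exI[of _ j]) (auto simp: blockdiag_parts)
  next
    case False
    with i have "i - rows P < rows Q" by simp
    then obtain j where "j < cols Q" "entry Q (i - rows P) j \<noteq> 0"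
      using Q by (auto simp: packed_def)
    then show ?thesis using False by (intro exI[of _ "cols P + j"]) (auto simp: blockdiag_parts)
  qed
next
  fix j assume j: "j < cols P + cols Q"
  show "\<exists>i<rows P + rows Q. entry (blockdiag P Q) i j \<noteq> 0"
  proof (cases "j < cols P")
    case True
    then obtain i where "i < rows P" "entry P i j \<noteq> 0" using P by (auto simp: packed_def)
    then show ?thesis using True by (intro exI[of _ i]) (auto simp: blockdiag_parts)
  next
    case False
    with j have "j - cols P < cols Q" by simp
    then obtain i where "i < rows Q" "entry Q i (j - cols P) \<noteq> 0"
      using Q by (auto simp: packed_def)
    then show ?thesis using False by (intro exI[of _ "rows P + i"]) (auto simp: blockdiag_parts)
  qed
qed

lemma pack_blockdiag: "pack (blockdiag A B) = blockdiag (pack A) (pack B)"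
  by (rule pack_eq_if_embeds[OF packed_blockdiag[OF packed_pack packed_pack]
        embeds_blockdiag[OF embeds_pack embeds_pack]])

section \<open>Additive decompositions\<close>

definition mat_le :: "mat \<Rightarrow> mat \<Rightarrow> bool" where
  "mat_le A M \<longleftrightarrow> same_shape A M \<and> (\<forall>i j. entry A i j \<le> entry M i j)"

definition sum_decomps :: "mat \<Rightarrow> mat list set" where
  "sum_decomps M = {xs. (\<forall>A\<in>set xs. same_shape A M) \<and> (\<forall>i j. entry M i j = (\<Sum>A\<leftarrow>xs. entry A i j))}"

definition compositions :: "mat \<Rightarrow> mat list set" where
  "compositions M = {xs \<in> sum_decomps M. \<forall>A\<in>set xs. 0 < weight A}"

definition splits :: "mat \<Rightarrow> (mat \<times> mat) set" where
  "splits M = {(A, B). same_shape A B \<and> madd A B = M}"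

lemma mat_le_if_in_sum_decomps: "xs \<in> sum_decomps M \<Longrightarrow> A \<in> set xs \<Longrightarrow> mat_le A M"
  using member_le_sum_list[of _ "map (\<lambda>A. entry A _ _) xs"] by (fastforce simp: sum_decomps_def mat_le_def)

lemma splits_iff_sum_decomps: "(A, B) \<in> splits M \<longleftrightarrow> [A, B] \<in> sum_decomps M"
proof
  assume "(A, B) \<in> splits M"
  then show "[A, B] \<in> sum_decomps M"
    by (auto simp: splits_def sum_decomps_def same_shape_def madd_parts)
next
  assume AB: "[A, B] \<in> sum_decomps M"
  then have "same_shape A B" by (auto simp: sum_decomps_def same_shape_def)
  moreover have "madd A B = M"
    by (rule mat_eqI) (use AB \<open>same_shape A B\<close> in \<open>auto simp: sum_decomps_def same_shape_def madd_parts\<close>)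
  ultimately show "(A, B) \<in> splits M" by (simp add: splits_def)
qed

lemma sum_list_swap_sum: "(\<Sum>i\<in>I. \<Sum>A\<leftarrow>xs. f A i) = (\<Sum>A\<leftarrow>xs. \<Sum>i\<in>I. f A i)"
  by (induction xs) (auto simp: sum.distrib)

lemma weight_sum_decomps: "xs \<in> sum_decomps M \<Longrightarrow> weight M = (\<Sum>A\<leftarrow>xs. weight A)"
  by (auto simp: weight_def sum_decomps_def same_shape_def sum_list_swap_sum
      intro!: arg_cong[where f = sum_list] map_cong)

lemma weight_madd: "same_shape A B \<Longrightarrow> weight (madd A B) = weight A + weight B"
  using weight_sum_decomps splits_iff_sum_decomps by (fastforce simp: splits_def)

lemma finite_mat_le: "finite {A. mat_le A M}"
proof -
  define K where "K = List.product [0..<rows M] [0..<cols M]"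
  define h where "h A = map (\<lambda>(i, j). entry A i j) K" for A
  have "inj_on h {A. mat_le A M}"
  proof (rule inj_onI)
    fix A B assume A: "A \<in> {A. mat_le A M}" and B: "B \<in> {A. mat_le A M}" and "h A = h B"
    show "A = B"
    proof (rule mat_eqI)
      show "rows A = rows B" "cols A = cols B" using A B by (auto simp: mat_le_def same_shape_def)
      fix i j assume "i < rows A" "j < cols A"
      then have "(i, j) \<in> set K" using A by (auto simp: K_def mat_le_def same_shape_def)
      then show "entry A i j = entry B i j" using \<open>h A = h B\<close> by (auto simp: h_def map_eq_conv)
    qed
  qed
  moreover have "h ` {A. mat_le A M} \<subseteq> {xs. set xs \<subseteq> {..weight M} \<and> length xs \<le> length K}"
    by (auto simp: h_def mat_le_def) (metis entry_le_weight le_trans)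
  then have "finite (h ` {A. mat_le A M})"
    using finite_lists_length_le[of "{..weight M}"] finite_subset by blast
  ultimately show ?thesis using finite_imageD by blast
qed

lemma finite_compositions: "finite (compositions M)"
proof -
  have "length xs \<le> (\<Sum>A\<leftarrow>xs. weight A)" if "\<forall>A\<in>set xs. 0 < weight A" for xs
    using that by (induction xs) auto
  then have "compositions M \<subseteq> {xs. set xs \<subseteq> {A. mat_le A M} \<and> length xs \<le> weight M}"
    using mat_le_if_in_sum_decomps weight_sum_decomps by (fastforce simp: compositions_def)
  then show ?thesis using finite_lists_length_le[OF finite_mat_le] finite_subset by blast
qed

lemma finite_splits: "finite (splits M)"
proof -
  have "splits M \<subseteq> {A. mat_le A M} \<times> {A. mat_le A M}"
    using splits_iff_sum_decomps mat_le_if_in_sum_decomps by fastforce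
  then show ?thesis using finite_mat_le finite_subset by blast
qed

text \<open>Note \<open>pack M = restrict_nz M M\<close>; \<open>extend_nz M\<close> inverts \<open>restrict_nz M\<close> on matrices below \<open>M\<close>.\<close>

definition restrict_nz :: "mat \<Rightarrow> mat \<Rightarrow> mat" where
  "restrict_nz M A = mk_mat (length (row_list M)) (length (col_list M))
     (\<lambda>a b. entry A (row_list M ! a) (col_list M ! b))"

definition row_index :: "mat \<Rightarrow> nat \<Rightarrow> nat" where
  "row_index M = the_inv_into {..<length (row_list M)} (\<lambda>a. row_list M ! a)"

definition col_index :: "mat \<Rightarrow> nat \<Rightarrow> nat" where
  "col_index M = the_inv_into {..<length (col_list M)} (\<lambda>b. col_list M ! b)"

definition extend_nz :: "mat \<Rightarrow> mat \<Rightarrow> mat" where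
  "extend_nz M A = mk_mat (rows M) (cols M) (\<lambda>i j. if i \<in> nz_rows M \<and> j \<in> nz_cols M
     then entry A (row_index M i) (col_index M j) else 0)"

lemma restrict_nz_parts:
  "rows (restrict_nz M A) = length (row_list M)" "cols (restrict_nz M A) = length (col_list M)"
  "entry (restrict_nz M A) a b = (if a < length (row_list M) \<and> b < length (col_list M)
     then entry A (row_list M ! a) (col_list M ! b) else 0)"
  using mk_mat_parts row_list_eq_Nil_iff[of M] by (simp_all add: restrict_nz_def)

lemma extend_nz_parts:
  "rows (extend_nz M A) = rows M" "cols (extend_nz M A) = cols M"
  "entry (extend_nz M A) i j = (if i \<in> nz_rows M \<and> j \<in> nz_cols M
     then entry A (row_index M i) (col_index M j) else 0)"
  using mk_mat_parts[OF rows_eq_0_iff] by (auto simp: extend_nz_def nz_rows_def nz_cols_def)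

lemma row_index_nth: "a < length (row_list M) \<Longrightarrow> row_index M (row_list M ! a) = a"
  unfolding row_index_def
  using the_inv_into_f_f strict_mono_on_imp_inj_on[OF strict_mono_on_nth_sorted[OF sorted_row_list]]
  by fastforce

lemma col_index_nth: "b < length (col_list M) \<Longrightarrow> col_index M (col_list M ! b) = b"
  unfolding col_index_def
  using the_inv_into_f_f strict_mono_on_imp_inj_on[OF strict_mono_on_nth_sorted[OF sorted_col_list]]
  by fastforce

lemma nth_row_index: "i \<in> nz_rows M \<Longrightarrow> row_list M ! row_index M i = i \<and> row_index M i < length (row_list M)"
  unfolding row_index_def
  using f_the_inv_into_f the_inv_into_into image_row_list[of M]
    strict_mono_on_imp_inj_on[OF strict_mono_on_nth_sorted[OF sorted_row_list]]
  by (metis lessThan_iff subset_refl)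

lemma nth_col_index: "j \<in> nz_cols M \<Longrightarrow> col_list M ! col_index M j = j \<and> col_index M j < length (col_list M)"
  unfolding col_index_def
  using f_the_inv_into_f the_inv_into_into image_col_list[of M]
    strict_mono_on_imp_inj_on[OF strict_mono_on_nth_sorted[OF sorted_col_list]]
  by (metis lessThan_iff subset_refl)

lemma same_shape_restrict_nz: "same_shape (restrict_nz M A) (pack M)"
  by (simp add: same_shape_def restrict_nz_parts pack_parts)

lemma embeds_restrict_nz:
  assumes "mat_le A M"
  shows "embeds (restrict_nz M A) (\<lambda>a. row_list M ! a) (\<lambda>b. col_list M ! b) A"
proof -
  have "i \<in> nz_rows M \<and> j \<in> nz_cols M" if "entry A i j \<noteq> 0" for i j
    using assms that nonzero_in_nz_rows_cols by (metis le_zero_eq mat_le_def)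
  then show ?thesis
    using assms row_list_nth_less col_list_nth_less
      strict_mono_on_nth_sorted[OF sorted_row_list] strict_mono_on_nth_sorted[OF sorted_col_list]
      image_row_list[of M] image_col_list[of M]
    by (auto simp: embeds_def restrict_nz_parts mat_le_def same_shape_def)
qed

lemma pack_restrict_nz: "mat_le A M \<Longrightarrow> pack (restrict_nz M A) = pack A"
  using pack_eq_pack_if_embeds[OF embeds_restrict_nz] by metis

lemma weight_restrict_nz: "mat_le A M \<Longrightarrow> weight (restrict_nz M A) = weight A"
  using weight_eq_if_embeds[OF embeds_restrict_nz] by metis

lemma restrict_extend_nz: "same_shape A (pack M) \<Longrightarrow> restrict_nz M (extend_nz M A) = A"
  using row_list_nth_less col_list_nth_less nth_mem[of _ "row_list M"] nth_mem[of _ "col_list M"]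
  by (intro mat_eqI)
    (auto simp: restrict_nz_parts extend_nz_parts same_shape_def pack_parts row_index_nth col_index_nth)

lemma extend_restrict_nz:
  assumes "mat_le A M"
  shows "extend_nz M (restrict_nz M A) = A"
proof (rule mat_eqI)
  show "rows (extend_nz M (restrict_nz M A)) = rows A" "cols (extend_nz M (restrict_nz M A)) = cols A"
    using assms by (auto simp: extend_nz_parts mat_le_def same_shape_def)
  have "entry A i j = 0" if "i \<notin> nz_rows M \<or> j \<notin> nz_cols M" for i j
    using assms that entry_eq_0_outside_nz by (metis le_zero_eq mat_le_def)
  then show "entry (extend_nz M (restrict_nz M A)) i j = entry A i j" for i j
    using nth_row_index[of i M] nth_col_index[of j M]
    by (auto simp: extend_nz_parts restrict_nz_parts)
qed

lemma restrict_nz_sum_decomps: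
  assumes "xs \<in> sum_decomps M"
  shows "map (restrict_nz M) xs \<in> sum_decomps (pack M)"
  using assms same_shape_restrict_nz
  by (auto simp: sum_decomps_def pack_parts restrict_nz_parts o_def sum_list_0)

lemma extend_nz_sum_decomps:
  assumes "ys \<in> sum_decomps (pack M)"
  shows "map (extend_nz M) ys \<in> sum_decomps M"
proof -
  have "entry M i j = (\<Sum>A\<leftarrow>ys. entry (extend_nz M A) i j)" for i j
  proof (cases "i \<in> nz_rows M \<and> j \<in> nz_cols M")
    case True
    then have "entry M i j = entry (pack M) (row_index M i) (col_index M j)"
      using nth_row_index[of i M] nth_col_index[of j M] by (simp add: pack_parts)
    then show ?thesis using assms True by (simp add: extend_nz_parts sum_decomps_def)
  next
    case False
    then show ?thesis
      using entry_eq_0_outside_nz[of i M j] by (auto simp: extend_nz_parts sum_list_0)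
  qed
  then show ?thesis by (simp add: sum_decomps_def same_shape_def extend_nz_parts o_def)
qed

lemma bij_betw_restrict_nz_sum_decomps:
  "bij_betw (map (restrict_nz M)) (sum_decomps M) (sum_decomps (pack M))"
proof (rule bij_betw_byWitness[where f' = "map (extend_nz M)"])
  show "\<forall>xs\<in>sum_decomps M. map (extend_nz M) (map (restrict_nz M) xs) = xs"
    using mat_le_if_in_sum_decomps extend_restrict_nz by (simp add: map_idI)
  show "\<forall>ys\<in>sum_decomps (pack M). map (restrict_nz M) (map (extend_nz M) ys) = ys"
    using restrict_extend_nz by (simp add: map_idI sum_decomps_def)
qed (use restrict_nz_sum_decomps extend_nz_sum_decomps in auto)

lemma bij_betw_restrict_nz_compositions:
  "bij_betw (map (restrict_nz M)) (compositions M) (compositions (pack M))"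
proof (rule bij_betw_subset[OF bij_betw_restrict_nz_sum_decomps])
  have weight: "xs \<in> sum_decomps M \<Longrightarrow> map weight (map (restrict_nz M) xs) = map weight xs" for xs
    using mat_le_if_in_sum_decomps weight_restrict_nz by simp
  show "compositions M \<subseteq> sum_decomps M" by (auto simp: compositions_def)
  show "map (restrict_nz M) ` compositions M = compositions (pack M)"
  proof
    show "map (restrict_nz M) ` compositions M \<subseteq> compositions (pack M)"
      using restrict_nz_sum_decomps weight by (force simp: compositions_def)
    show "compositions (pack M) \<subseteq> map (restrict_nz M) ` compositions M"
    proof
      fix ys assume ys: "ys \<in> compositions (pack M)"
      then have "ys \<in> map (restrict_nz M) ` sum_decomps M"
        using bij_betw_imp_surj_on[OF bij_betw_restrict_nz_sum_decomps]
        by (auto simp: compositions_def)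
      then obtain xs where "xs \<in> sum_decomps M" "ys = map (restrict_nz M) xs" by blast
      then show "ys \<in> map (restrict_nz M) ` compositions M"
        using ys weight[of xs] by (auto simp: compositions_def dest: map_eq_conv[THEN iffD1])
    qed
  qed
qed

lemma bij_betw_restrict_nz_splits:
  "bij_betw (map_prod (restrict_nz M) (restrict_nz M)) (splits M) (splits (pack M))"
proof (rule bij_betw_byWitness[where f' = "map_prod (extend_nz M) (extend_nz M)"])
  show "\<forall>t\<in>splits M. map_prod (extend_nz M) (extend_nz M) (map_prod (restrict_nz M) (restrict_nz M) t) = t"
    using mat_le_if_in_sum_decomps extend_restrict_nz by (auto simp: splits_iff_sum_decomps)
  show "\<forall>t\<in>splits (pack M). map_prod (restrict_nz M) (restrict_nz M) (map_prod (extend_nz M) (extend_nz M) t) = t"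
    using restrict_extend_nz by (auto simp: splits_iff_sum_decomps sum_decomps_def)
  show "map_prod (restrict_nz M) (restrict_nz M) ` splits M \<subseteq> splits (pack M)"
    using restrict_nz_sum_decomps by (fastforce simp: splits_iff_sum_decomps)
  show "map_prod (extend_nz M) (extend_nz M) ` splits (pack M) \<subseteq> splits M"
    using extend_nz_sum_decomps by (fastforce simp: splits_iff_sum_decomps)
qed

definition zero_mat :: "mat \<Rightarrow> mat" where
  "zero_mat M = mk_mat (rows M) (cols M) (\<lambda>_ _. 0)"

lemma zero_mat_parts [simp]:
  "rows (zero_mat M) = rows M" "cols (zero_mat M) = cols M" "entry (zero_mat M) i j = 0"
  using mk_mat_parts[OF rows_eq_0_iff[of M]] by (auto simp: zero_mat_def)

lemma weight_zero_mat [simp]: "weight (zero_mat M) = 0"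
  by (simp add: weight_eq_0_iff)

lemma pack_zero_mat [simp]: "pack (zero_mat M) = emptyM"
  by (simp add: pack_weight_0)

lemma splits_iff:
  "(A, B) \<in> splits M \<longleftrightarrow> same_shape A M \<and> same_shape B M \<and> (\<forall>i j. entry M i j = entry A i j + entry B i j)"
  by (auto simp: splits_iff_sum_decomps sum_decomps_def same_shape_def)

lemma splits_weight_0_right: "(A, B) \<in> splits M \<Longrightarrow> weight B = 0 \<longleftrightarrow> A = M \<and> B = zero_mat M"
  by (auto simp: splits_iff weight_eq_0_iff same_shape_def intro!: mat_eqI)

lemma splits_weight_0_left: "(A, B) \<in> splits M \<Longrightarrow> weight A = 0 \<longleftrightarrow> A = zero_mat M \<and> B = M"
  by (auto simp: splits_iff weight_eq_0_iff same_shape_def intro!: mat_eqI)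

lemma compositions_Nil_iff: "[] \<in> compositions M \<longleftrightarrow> weight M = 0"
  by (simp add: compositions_def sum_decomps_def weight_eq_0_iff)

definition msum :: "mat \<Rightarrow> mat list \<Rightarrow> mat" where
  "msum M xs = mk_mat (rows M) (cols M) (\<lambda>i j. \<Sum>X\<leftarrow>xs. entry X i j)"

lemma msum_parts:
  assumes "\<forall>X\<in>set xs. same_shape X M"
  shows "same_shape (msum M xs) M" "entry (msum M xs) i j = (\<Sum>X\<leftarrow>xs. entry X i j)"
  using assms mk_mat_parts[OF rows_eq_0_iff[of M]] entry_eq_0_outside
  by (auto simp: msum_def same_shape_def sum_list_0)

lemma msum_compositions: "xs \<in> compositions A \<Longrightarrow> same_shape A M \<Longrightarrow> msum M xs = A"
  by (rule mat_eqI)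
    (auto simp: msum_parts compositions_def sum_decomps_def same_shape_def msum_def mk_mat_parts rows_eq_0_iff)

lemma append_compositions:
  "(A, B) \<in> splits M \<Longrightarrow> xs \<in> compositions A \<Longrightarrow> ys \<in> compositions B \<Longrightarrow> xs @ ys \<in> compositions M"
  by (auto simp: splits_iff compositions_def sum_decomps_def same_shape_def)

lemma compositions_append_split:
  assumes "xs @ ys \<in> compositions M"
  shows "(msum M xs, msum M ys) \<in> splits M \<and> xs \<in> compositions (msum M xs) \<and> ys \<in> compositions (msum M ys)"
proof -
  have "\<forall>X\<in>set xs. same_shape X M" "\<forall>X\<in>set ys. same_shape X M"
    using assms by (auto simp: compositions_def sum_decomps_def)
  then show ?thesis
    using assms msum_parts[of xs M] msum_parts[of ys M]
    by (auto simp: splits_iff compositions_def sum_decomps_def same_shape_def)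
qed

lemma singleton_compositions: "[B] \<in> compositions B \<longleftrightarrow> 0 < weight B"
  by (simp add: compositions_def sum_decomps_def same_shape_def)

lemma msum_singleton: "same_shape B M \<Longrightarrow> msum M [B] = B"
  using msum_parts[of "[B]" M] by (intro mat_eqI) (auto simp: same_shape_def)

section \<open>Finitely supported functions\<close>

lemma supp_delta [simp]: "supp (delta M) = {M}"
  by (auto simp: supp_def delta_def)

lemma fin_delta [simp]: "fin (delta M)"
  by (simp add: fin_def)

lemma fin_subset: "fin x \<Longrightarrow> supp y \<subseteq> supp x \<Longrightarrow> fin y"
  by (auto simp: fin_def intro: finite_subset)

lemma fin_diff: "fin x \<Longrightarrow> fin y \<Longrightarrow> fin (\<lambda>N. x N - y N)"
  by (auto simp: fin_def supp_def intro: finite_subset[of _ "supp x \<union> supp y"])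

lemma fin_scale: "fin x \<Longrightarrow> fin (\<lambda>N. c * x N)"
  by (erule fin_subset) (auto simp: supp_def)

lemma fin_sum:
  assumes "finite I" "\<forall>i\<in>I. fin (w i)"
  shows "fin (\<lambda>N. \<Sum>i\<in>I. c i * w i N)"
proof -
  have "supp (\<lambda>N. \<Sum>i\<in>I. c i * w i N) \<subseteq> (\<Union>i\<in>I. supp (w i))"
    by (auto simp: supp_def intro: ccontr sum.neutral)
  then show ?thesis using assms by (auto simp: fin_def intro: finite_subset)
qed

lemma sum_supp_eq_superset:
  "finite F \<Longrightarrow> supp x \<subseteq> F \<Longrightarrow> (\<And>M. x M = 0 \<Longrightarrow> h M = 0) \<Longrightarrow> sum h (supp x) = sum h F"
  by (rule sum.mono_neutral_left) (auto simp: supp_def)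

lemma lspan_zero: "(\<lambda>_. 0) \<in> lspan S"
  unfolding lspan_def by (rule CollectI, rule exI[of _ 0]) auto

lemma lspan_base: "w \<in> S \<Longrightarrow> w \<in> lspan S"
  unfolding lspan_def by (intro CollectI exI[of _ 1] exI[of _ "\<lambda>_. 1"] exI[of _ "\<lambda>_. w"]) auto

lemma lspan_lincomb2:
  assumes "u \<in> lspan S" "v \<in> lspan S"
  shows "(\<lambda>z. a * u z + b * v z) \<in> lspan S"
proof -
  obtain n1 :: nat and c1 w1 where 1: "\<forall>i<n1. w1 i \<in> S" "u = (\<lambda>z. \<Sum>i<n1. c1 i * w1 i z)"
    using assms(1) by (auto simp: lspan_def)
  obtain n2 :: nat and c2 w2 where 2: "\<forall>i<n2. w2 i \<in> S" "v = (\<lambda>z. \<Sum>i<n2. c2 i * w2 i z)"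
    using assms(2) by (auto simp: lspan_def)
  define c where "c i = (if i < n1 then a * c1 i else b * c2 (i - n1))" for i
  define w where "w i = (if i < n1 then w1 i else w2 (i - n1))" for i
  have split: "(\<Sum>i<n1 + n2. f i) = (\<Sum>i<n1. f i) + (\<Sum>i<n2. f (n1 + i))" for f :: "nat \<Rightarrow> rat"
    by (induction n2) auto
  have "\<forall>i<n1 + n2. w i \<in> S" using 1 2 by (auto simp: w_def)
  moreover have "(\<lambda>z. a * u z + b * v z) = (\<lambda>z. \<Sum>i<n1 + n2. c i * w i z)"
    unfolding split 1 2 by (simp add: c_def w_def sum_distrib_left mult.assoc)
  ultimately show ?thesis unfolding lspan_def by blast
qed

lemma lspan_diff: "u \<in> lspan S \<Longrightarrow> v \<in> lspan S \<Longrightarrow> (\<lambda>z. u z - v z) \<in> lspan S"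
  using lspan_lincomb2[of u S v 1 "-1"] by simp

lemma lspan_sum:
  assumes "finite I" "\<forall>i\<in>I. w i \<in> lspan S"
  shows "(\<lambda>z. \<Sum>i\<in>I. c i * w i z) \<in> lspan S"
  using assms
proof (induction I rule: finite_induct)
  case empty
  then show ?case using lspan_zero by simp
next
  case (insert i I)
  then show ?case using lspan_lincomb2[of "w i" S _ "c i" 1] by simp
qed

definition lincomb :: "'t set \<Rightarrow> ('t \<Rightarrow> rat) \<Rightarrow> ('t \<Rightarrow> 'b) \<Rightarrow> ('b \<Rightarrow> rat)" where
  "lincomb T c g = (\<lambda>N. \<Sum>t\<in>T. c t * delta (g t) N)"

lemma supp_lincomb: "supp (lincomb T c g) \<subseteq> g ` T"
proof
  fix N assume "N \<in> supp (lincomb T c g)"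
  then have "(\<Sum>t\<in>T. c t * delta (g t) N) \<noteq> 0" by (simp add: supp_def lincomb_def)
  then obtain t where "t \<in> T" "c t * delta (g t) N \<noteq> 0"
    by (rule sum.not_neutral_contains_not_neutral)
  then show "N \<in> g ` T" by (auto simp: delta_def split: if_splits)
qed

lemma fin_lincomb: "finite T \<Longrightarrow> fin (lincomb T c g)"
  unfolding fin_def by (rule finite_subset[OF supp_lincomb]) simp

lemma lincomb_supp: "fin x \<Longrightarrow> lincomb (supp x) x id = x"
  by (auto simp: lincomb_def delta_def fin_def supp_def if_distrib[of "\<lambda>z. _ * z"] cong: if_cong)

definition lmap :: "('a \<Rightarrow> 'b) \<Rightarrow> ('a \<Rightarrow> rat) \<Rightarrow> ('b \<Rightarrow> rat)" where
  "lmap f x = (\<lambda>Q. \<Sum>M\<in>supp x. if f M = Q then x M else 0)"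

lemma lmap_superset:
  "finite F \<Longrightarrow> supp x \<subseteq> F \<Longrightarrow> lmap f x Q = (\<Sum>M\<in>F. if f M = Q then x M else 0)"
  unfolding lmap_def by (rule sum_supp_eq_superset) auto

lemma lmap_eq_lincomb: "lmap f x = lincomb (supp x) x f"
  by (auto simp: lmap_def lincomb_def delta_def intro!: sum.cong)

lemma fin_lmap: "fin x \<Longrightarrow> fin (lmap f x)"
  unfolding lmap_eq_lincomb by (rule fin_lincomb) (simp add: fin_def)

lemma lmap_delta: "lmap f (delta M) = delta (f M)"
  unfolding lmap_def supp_delta by (auto simp: delta_def)

lemma sum_if_delta:
  assumes "finite F" "a \<in> F"
  shows "(\<Sum>M\<in>F. if P M then c * delta a M else 0) = (if P a then c else 0)"
proof -
  have "(\<Sum>M\<in>F. if P M then c * delta a M else 0) = (\<Sum>M\<in>F. if a = M then (if P a then c else 0) else 0)"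
    by (intro sum.cong refl) (simp add: delta_def)
  then show ?thesis using assms by simp
qed

lemma lmap_lincomb:
  assumes "finite T"
  shows "lmap f (lincomb T c g) = lincomb T c (\<lambda>t. f (g t))"
proof
  fix Q
  have "lmap f (lincomb T c g) Q = (\<Sum>M\<in>g ` T. if f M = Q then lincomb T c g M else 0)"
    by (rule lmap_superset[OF _ supp_lincomb]) (simp add: assms)
  also have "\<dots> = (\<Sum>M\<in>g ` T. \<Sum>t\<in>T. if f M = Q then c t * delta (g t) M else 0)"
    by (intro sum.cong refl) (simp add: lincomb_def)
  also have "\<dots> = (\<Sum>t\<in>T. \<Sum>M\<in>g ` T. if f M = Q then c t * delta (g t) M else 0)"
    by (rule sum.swap)
  also have "\<dots> = (\<Sum>t\<in>T. if f (g t) = Q then c t else 0)"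
    using assms by (intro sum.cong refl sum_if_delta) auto
  also have "\<dots> = lincomb T c (\<lambda>t. f (g t)) Q"
    unfolding lincomb_def by (intro sum.cong refl) (simp add: delta_def)
  finally show "lmap f (lincomb T c g) Q = lincomb T c (\<lambda>t. f (g t)) Q" .
qed

lemma lmap_sum:
  assumes "finite I" "\<forall>i\<in>I. fin (w i)"
  shows "lmap f (\<lambda>N. \<Sum>i\<in>I. c i * w i N) = (\<lambda>Q. \<Sum>i\<in>I. c i * lmap f (w i) Q)"
proof
  fix Q
  define F where "F = (\<Union>i\<in>I. supp (w i))"
  have F: "finite F" "\<forall>i\<in>I. supp (w i) \<subseteq> F" using assms by (auto simp: F_def fin_def)
  have "supp (\<lambda>N. \<Sum>i\<in>I. c i * w i N) \<subseteq> F"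
    by (auto simp: supp_def F_def intro: ccontr sum.neutral)
  then have "lmap f (\<lambda>N. \<Sum>i\<in>I. c i * w i N) Q = (\<Sum>M\<in>F. if f M = Q then \<Sum>i\<in>I. c i * w i M else 0)"
    using F by (simp add: lmap_superset)
  also have "\<dots> = (\<Sum>M\<in>F. \<Sum>i\<in>I. c i * (if f M = Q then w i M else 0))"
    by (intro sum.cong) auto
  also have "\<dots> = (\<Sum>i\<in>I. c i * lmap f (w i) Q)"
    using F by (subst sum.swap) (simp add: sum_distrib_left lmap_superset)
  finally show "lmap f (\<lambda>N. \<Sum>i\<in>I. c i * w i N) Q = (\<Sum>i\<in>I. c i * lmap f (w i) Q)" .
qed

lemma lmap_diff:
  assumes "fin x" "fin y"
  shows "lmap f (\<lambda>N. x N - y N) = (\<lambda>Q. lmap f x Q - lmap f y Q)"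
proof -
  define w where "w i = (if i = (0::nat) then x else y)" for i
  define c where "c i = (if i = (0::nat) then 1 else -1 :: rat)" for i
  have "(\<lambda>N. x N - y N) = (\<lambda>N. \<Sum>i\<in>{0, 1}. c i * w i N)"
    by (simp add: c_def w_def)
  moreover have "lmap f (\<lambda>N. \<Sum>i\<in>{0, 1}. c i * w i N) = (\<lambda>Q. \<Sum>i\<in>{0, 1}. c i * lmap f (w i) Q)"
    using assms by (intro lmap_sum) (auto simp: w_def)
  ultimately show ?thesis by (simp add: c_def w_def)
qed

lemma lmap_scale_delta: "lmap f (\<lambda>N. c * delta M N) = (\<lambda>Q. c * delta (f M) Q)"
  using lmap_sum[of "{()}" "\<lambda>_. delta M" f "\<lambda>_. c"] by (simp add: lmap_delta)

section \<open>The ideal \<open>I\<close>\<close>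

lemma Iid_iff: "y \<in> Iid \<longleftrightarrow> fin y \<and> lmap pack y = (\<lambda>_. 0)"
proof
  assume "y \<in> Iid"
  then obtain n :: nat and c w where w: "\<forall>i<n. \<exists>M. w i = (\<lambda>N. delta M N - delta (pack M) N)"
    and y: "y = (\<lambda>z. \<Sum>i<n. c i * w i z)"
    by (auto simp: Iid_def lspan_def)
  have "\<forall>i\<in>{..<n}. fin (w i) \<and> lmap pack (w i) = (\<lambda>_. 0)"
    using w by (auto simp: fin_diff lmap_diff lmap_delta)
  then show "fin y \<and> lmap pack y = (\<lambda>_. 0)"
    unfolding y by (simp add: fin_sum lmap_sum)
next
  assume y: "fin y \<and> lmap pack y = (\<lambda>_. 0)"
  have "y = (\<lambda>z. lincomb (supp y) y id z - lincomb (supp y) y pack z)"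
    using y lincomb_supp[of y] by (simp add: lmap_eq_lincomb)
  also have "\<dots> = (\<lambda>z. \<Sum>M\<in>supp y. y M * (delta M z - delta (pack M) z))"
    by (simp add: lincomb_def algebra_simps sum_subtractf)
  also have "\<dots> \<in> Iid"
    using y unfolding Iid_def by (intro lspan_sum) (auto simp: fin_def intro: lspan_base)
  finally show "y \<in> Iid" .
qed

lemma Iid_diff_iff:
  "fin x \<Longrightarrow> fin y \<Longrightarrow> (\<lambda>N. x N - y N) \<in> Iid \<longleftrightarrow> lmap pack x = lmap pack y"
  by (auto simp: Iid_iff fin_diff lmap_diff fun_eq_iff)

lemma Iid_delta_minus_pack: "(\<lambda>N. delta M N - delta (pack M) N) \<in> Iid"
  unfolding Iid_def by (rule lspan_base) blast

lemma sum_pack_Iid: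
  assumes "y \<in> Iid"
  shows "(\<Sum>M\<in>supp y. y M * h (pack M)) = 0"
proof -
  have fin: "finite (supp y)" using assms by (simp add: Iid_iff fin_def)
  have "(\<Sum>M\<in>supp y. y M * h (pack M))
      = (\<Sum>P\<in>pack ` supp y. \<Sum>M\<in>{M \<in> supp y. pack M = P}. y M * h (pack M))"
    by (rule sum.image_gen[OF fin])
  also have "\<dots> = (\<Sum>P\<in>pack ` supp y. (\<Sum>M\<in>{M \<in> supp y. pack M = P}. y M) * h P)"
    by (simp add: sum_distrib_right)
  also have "\<dots> = (\<Sum>P\<in>pack ` supp y. lmap pack y P * h P)"
    using fin by (simp add: lmap_def sum.inter_filter)
  also have "\<dots> = 0"
    using assms by (simp add: Iid_iff)
  finally show ?thesis .
qed

lemma hpart_Iid: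
  assumes "x \<in> Iid"
  shows "hpart n x \<in> Iid"
proof -
  have fin: "finite (supp x)" "supp (hpart n x) \<subseteq> supp x"
    using assms by (auto simp: Iid_iff fin_def supp_def hpart_def)
  have "lmap pack (hpart n x) Q = 0" for Q
  proof -
    have "lmap pack (hpart n x) Q = (\<Sum>M\<in>supp x. if pack M = Q then hpart n x M else 0)"
      using fin by (rule lmap_superset)
    also have "\<dots> = (\<Sum>M\<in>supp x. (if weight Q = n then 1 else 0) * (if pack M = Q then x M else 0))"
      by (intro sum.cong refl) (auto simp: hpart_def dest: arg_cong[where f = weight])
    also have "\<dots> = (if weight Q = n then 1 else 0) * lmap pack x Q"
      by (simp add: lmap_def sum_distrib_left)
    finally show ?thesis using assms by (simp add: Iid_iff)
  qed
  then show ?thesis using fin by (auto simp: Iid_iff fin_def intro: finite_subset)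
qed

lemma counit_Iid:
  assumes "x \<in> Iid"
  shows "counit x = 0"
proof -
  have "counit x = (\<Sum>M\<in>supp x. x M * (\<lambda>P. if weight P = 0 then 1 else 0) (pack M))"
    unfolding counit_def by (intro sum.cong refl) simp
  also have "\<dots> = 0" by (rule sum_pack_Iid[OF assms])
  finally show ?thesis .
qed

lemma counit_homog: "homog n x \<Longrightarrow> 0 < n \<Longrightarrow> counit x = 0"
  unfolding counit_def homog_def by (intro sum.neutral) (auto simp: supp_def)

lemma homog_0_congruent_unit:
  assumes "fin x" and "homog 0 x"
  shows "(\<lambda>N. x N - (\<Sum>M\<in>supp x. x M) * delta emptyM N) \<in> Iid"
proof -
  have "lmap pack x = (\<lambda>Q. (\<Sum>M\<in>supp x. x M) * delta emptyM Q)"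
    using assms(2) pack_weight_0
    by (auto simp: lmap_def homog_def supp_def delta_def intro!: ext sum.cong)
  then show ?thesis
    using assms(1) by (simp add: Iid_diff_iff fin_scale lmap_scale_delta)
qed

lemma lmap_pack_packed:
  assumes "fin y" and "\<forall>M. y M \<noteq> 0 \<longrightarrow> packed M"
  shows "lmap pack y = y"
proof
  fix Q
  have "lmap pack y Q = (\<Sum>M\<in>supp y. if M = Q then y M else 0)"
    unfolding lmap_def using assms pack_packed by (intro sum.cong refl) (auto simp: supp_def)
  also have "\<dots> = y Q"
    using assms(1) by (auto simp: fin_def supp_def)
  finally show "lmap pack y Q = y Q" .
qed

lemma packed_if_lmap_pack_nonzero: "lmap pack x M \<noteq> 0 \<Longrightarrow> packed M"
  using supp_lincomb[of "supp x" x pack] packed_pack by (auto simp: lmap_eq_lincomb supp_def)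

lemma packed_representative:
  assumes "fin x"
  shows "fin (lmap pack x) \<and> (\<forall>M. lmap pack x M \<noteq> 0 \<longrightarrow> packed M) \<and> (\<lambda>N. x N - lmap pack x N) \<in> Iid"
  using assms packed_if_lmap_pack_nonzero lmap_pack_packed[OF fin_lmap[OF assms]]
  by (simp add: Iid_diff_iff fin_lmap)

lemma packed_Iid_eq_0: "fin y \<Longrightarrow> (\<forall>M. y M \<noteq> 0 \<longrightarrow> packed M) \<Longrightarrow> y \<in> Iid \<Longrightarrow> y = (\<lambda>_. 0)"
  using lmap_pack_packed by (simp add: Iid_iff)

section \<open>Product and coproduct\<close>

lemma mult_eq_lincomb:
  "mult x y = lincomb (supp x \<times> supp y) (\<lambda>(M, M'). x M * y M') (\<lambda>(M, M'). blockdiag M M')"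
  by (auto simp: mult_def lincomb_def sum.cartesian_product delta_def intro!: sum.cong)

lemma fin_mult: "fin x \<Longrightarrow> fin y \<Longrightarrow> fin (mult x y)"
  unfolding mult_eq_lincomb by (rule fin_lincomb) (simp add: fin_def)

lemma mult_delta: "mult (delta P) (delta Q) = delta (blockdiag P Q)"
  unfolding mult_def supp_delta by (auto simp: delta_def)

lemma lmap_pack_mult:
  assumes "fin x" "fin y"
  shows "lmap pack (mult x y) Q
    = (\<Sum>M\<in>supp x. \<Sum>M'\<in>supp y. x M * y M' * delta (blockdiag (pack M) (pack M')) Q)"
proof -
  have "lmap pack (mult x y) = lincomb (supp x \<times> supp y) (\<lambda>(M, M'). x M * y M')
      (\<lambda>t. pack ((\<lambda>(M, M'). blockdiag M M') t))"
    unfolding mult_eq_lincomb using assms by (intro lmap_lincomb) (simp add: fin_def)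
  then show ?thesis
    by (simp add: lincomb_def sum.cartesian_product case_prod_beta pack_blockdiag)
qed

lemma mult_Iid_right:
  assumes "fin x" "y \<in> Iid"
  shows "mult x y \<in> Iid"
proof -
  have "lmap pack (mult x y) Q
      = (\<Sum>M\<in>supp x. x M * (\<Sum>M'\<in>supp y. y M' * delta (blockdiag (pack M) (pack M')) Q))" for Q
    using assms by (simp add: lmap_pack_mult Iid_iff sum_distrib_left mult.assoc)
  moreover have "(\<Sum>M'\<in>supp y. y M' * delta (blockdiag (pack M) (pack M')) Q) = 0" for M Q
    using sum_pack_Iid[OF assms(2), of "\<lambda>P. delta (blockdiag (pack M) P) Q"] by simp
  ultimately show ?thesis
    using assms by (simp add: Iid_iff fin_mult fun_eq_iff)
qed

lemma mult_Iid_left: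
  assumes "fin x" "y \<in> Iid"
  shows "mult y x \<in> Iid"
proof -
  have "lmap pack (mult y x) Q
      = (\<Sum>M\<in>supp y. \<Sum>M'\<in>supp x. y M * x M' * delta (blockdiag (pack M) (pack M')) Q)" for Q
    using assms by (simp add: lmap_pack_mult Iid_iff)
  also have "\<dots> Q = (\<Sum>M'\<in>supp x. \<Sum>M\<in>supp y. y M * x M' * delta (blockdiag (pack M) (pack M')) Q)" for Q
    by (rule sum.swap)
  also have "\<dots> Q = (\<Sum>M'\<in>supp x. x M' * (\<Sum>M\<in>supp y. y M * delta (blockdiag (pack M) (pack M')) Q))" for Q
    by (simp add: sum_distrib_left mult_ac)
  moreover have "(\<Sum>M\<in>supp y. y M * delta (blockdiag (pack M) (pack M')) Q) = 0" for M' Q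
    using sum_pack_Iid[OF assms(2), of "\<lambda>P. delta (blockdiag P (pack M')) Q"] by simp
  ultimately show ?thesis
    using assms by (simp add: Iid_iff fin_mult fun_eq_iff)
qed

lemma homog_mult:
  assumes "homog m x" "homog n y"
  shows "homog (m + n) (mult x y)"
  unfolding homog_def
proof (intro allI impI)
  fix N assume "mult x y N \<noteq> 0"
  then have "N \<in> (\<lambda>(M, M'). blockdiag M M') ` (supp x \<times> supp y)"
    using supp_lincomb unfolding mult_eq_lincomb by (fastforce simp: supp_def)
  then show "weight N = m + n"
    using assms by (auto simp: homog_def supp_def weight_blockdiag)
qed

lemma cop_delta: "cop (delta M) = (\<lambda>AB. if AB \<in> splits M then 1 else 0)"
  by (auto simp: cop_def splits_def delta_def)

lemma cop_sum: "cop (\<lambda>z. \<Sum>i\<in>I. c i * w i z) = (\<lambda>AB. \<Sum>i\<in>I. c i * cop (w i) AB)"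
  by (auto simp: cop_def)

lemma tens_Iid_left: "a \<in> Iid \<Longrightarrow> fin b \<Longrightarrow> tens a b \<in> Jid"
  unfolding Jid_def by (rule lspan_base) blast

lemma tens_Iid_right: "fin a \<Longrightarrow> b \<in> Iid \<Longrightarrow> tens a b \<in> Jid"
  unfolding Jid_def by (rule lspan_base) blast

lemma Jid_delta_minus_pack:
  "(\<lambda>AB. delta t AB - delta (map_prod pack pack t) AB) \<in> Jid"
proof -
  obtain A B where t: "t = (A, B)" by fastforce
  have "tens (\<lambda>N. delta A N - delta (pack A) N) (delta B) \<in> Jid"
    by (simp add: tens_Iid_left Iid_delta_minus_pack)
  moreover have "tens (delta (pack A)) (\<lambda>N. delta B N - delta (pack B) N) \<in> Jid"
    by (simp add: tens_Iid_right Iid_delta_minus_pack)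
  ultimately have "(\<lambda>z. 1 * tens (\<lambda>N. delta A N - delta (pack A) N) (delta B) z
      + 1 * tens (delta (pack A)) (\<lambda>N. delta B N - delta (pack B) N) z) \<in> Jid"
    unfolding Jid_def by (rule lspan_lincomb2)
  moreover have "(\<lambda>z. 1 * tens (\<lambda>N. delta A N - delta (pack A) N) (delta B) z
      + 1 * tens (delta (pack A)) (\<lambda>N. delta B N - delta (pack B) N) z)
      = (\<lambda>AB. delta t AB - delta (map_prod pack pack t) AB)"
    by (auto simp: t tens_def delta_def)
  ultimately show ?thesis by simp
qed

lemma cop_delta_minus_packed:
  "(\<lambda>AB. cop (delta M) AB - (\<Sum>t\<in>splits M. delta (map_prod pack pack t) AB)) \<in> Jid"
proof -
  have "(\<lambda>AB. \<Sum>t\<in>splits M. 1 * (delta t AB - delta (map_prod pack pack t) AB)) \<in> Jid"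
    unfolding Jid_def using Jid_delta_minus_pack finite_splits
    by (intro lspan_sum) (auto simp: Jid_def)
  moreover have "(\<Sum>t\<in>splits M. delta t AB) = (if AB \<in> splits M then 1 else 0)" for AB
    using finite_splits by (simp add: delta_def)
  ultimately show ?thesis by (simp add: cop_delta sum_subtractf)
qed

lemma sum_splits_pack:
  "(\<Sum>t\<in>splits (pack M). delta (map_prod pack pack t) AB) = (\<Sum>t\<in>splits M. delta (map_prod pack pack t) AB)"
proof -
  have "(\<Sum>t\<in>splits (pack M). delta (map_prod pack pack t) AB)
      = (\<Sum>t\<in>splits M. delta (map_prod pack pack (map_prod (restrict_nz M) (restrict_nz M) t)) AB)"
    by (rule sum.reindex_bij_betw[OF bij_betw_restrict_nz_splits, symmetric])
  also have "\<dots> = (\<Sum>t\<in>splits M. delta (map_prod pack pack t) AB)"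
    using mat_le_if_in_sum_decomps pack_restrict_nz
    by (intro sum.cong refl) (auto simp: splits_iff_sum_decomps)
  finally show ?thesis .
qed

lemma cop_delta_minus_pack: "cop (\<lambda>N. delta M N - delta (pack M) N) \<in> Jid"
proof -
  have "cop (\<lambda>N. delta M N - delta (pack M) N)
      = (\<lambda>AB. (cop (delta M) AB - (\<Sum>t\<in>splits M. delta (map_prod pack pack t) AB))
          - (cop (delta (pack M)) AB - (\<Sum>t\<in>splits (pack M). delta (map_prod pack pack t) AB)))"
    by (simp add: sum_splits_pack cop_def fun_eq_iff)
  then show ?thesis
    using lspan_diff[OF cop_delta_minus_packed[of M, unfolded Jid_def]
        cop_delta_minus_packed[of "pack M", unfolded Jid_def]]
    by (simp add: Jid_def)
qed

lemma cop_Iid: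
  assumes "x \<in> Iid"
  shows "cop x \<in> Jid"
proof -
  obtain n :: nat and c w where w: "\<forall>i<n. \<exists>M. w i = (\<lambda>N. delta M N - delta (pack M) N)"
    and x: "x = (\<lambda>z. \<Sum>i<n. c i * w i z)"
    using assms by (auto simp: Iid_def lspan_def)
  then have "\<forall>i\<in>{..<n}. cop (w i) \<in> Jid"
    using cop_delta_minus_pack by auto
  then show ?thesis
    unfolding x cop_sum Jid_def by (intro lspan_sum) (auto simp: Jid_def)
qed

lemma homog_cop: "homog n x \<Longrightarrow> cop x (A, B) \<noteq> 0 \<Longrightarrow> weight A + weight B = n"
  by (auto simp: cop_def homog_def weight_madd split: if_splits)

lemma splits_alt_def:
  "splits P = {(A, B). same_shape A B \<and> same_shape A P \<and> madd A B = P}"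
  by (auto simp: splits_def same_shape_def madd_parts)

lemma cop_delta_packed_formula:
  "(\<lambda>AB. cop (delta P) AB - (\<Sum>(A, B)\<in>{(A, B). same_shape A B \<and> same_shape A P \<and> madd A B = P}.
      tens (delta (pack A)) (delta (pack B)) AB)) \<in> Jid"
proof -
  have "tens (delta (pack A)) (delta (pack B)) AB = delta (map_prod pack pack (A, B)) AB" for A B AB
    by (auto simp: tens_def delta_def split: prod.splits)
  then show ?thesis
    unfolding splits_alt_def[symmetric] using cop_delta_minus_packed[of P] by (simp add: case_prod_beta map_prod_def)
qed

section \<open>The antipode\<close>

definition blockdiag_list :: "mat list \<Rightarrow> mat" where
  "blockdiag_list xs = foldr blockdiag xs emptyM"

lemma blockdiag_list_simps [simp]:
  "blockdiag_list [] = emptyM" "blockdiag_list (A # xs) = blockdiag A (blockdiag_list xs)"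
  by (simp_all add: blockdiag_list_def)

lemma blockdiag_list_snoc: "blockdiag_list (xs @ [B]) = blockdiag (blockdiag_list xs) B"
  by (induction xs) (simp_all add: blockdiag_assoc)

lemma pack_blockdiag_list: "pack (blockdiag_list xs) = blockdiag_list (map pack xs)"
  by (induction xs) (simp_all add: pack_blockdiag)

definition antipode_mat :: "mat \<Rightarrow> mat \<Rightarrow> rat" where
  "antipode_mat M = lincomb (compositions M) (\<lambda>xs. (-1) ^ length xs) blockdiag_list"

definition antipode :: "(mat \<Rightarrow> rat) \<Rightarrow> mat \<Rightarrow> rat" where
  "antipode x = (\<lambda>N. \<Sum>M\<in>supp x. x M * antipode_mat M N)"

lemma fin_antipode_mat: "fin (antipode_mat M)"
  unfolding antipode_mat_def by (rule fin_lincomb[OF finite_compositions])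

lemma antipode_delta: "antipode (delta M) = antipode_mat M"
  unfolding antipode_def supp_delta by (simp add: delta_def)

lemma antipode_superset:
  "finite F \<Longrightarrow> supp x \<subseteq> F \<Longrightarrow> antipode x = (\<lambda>N. \<Sum>M\<in>F. x M * antipode_mat M N)"
  unfolding antipode_def by (intro ext sum_supp_eq_superset) auto

lemma fin_antipode: "fin x \<Longrightarrow> fin (antipode x)"
  unfolding antipode_def using fin_antipode_mat by (intro fin_sum) (auto simp: fin_def)

lemma linear_map_antipode: "linear_map antipode"
  unfolding linear_map_def
proof (intro conjI allI impI)
  fix a b :: rat and x y :: "mat \<Rightarrow> rat" assume "fin x" "fin y"
  then have F: "finite (supp x \<union> supp y)" "supp (\<lambda>N. a * x N + b * y N) \<subseteq> supp x \<union> supp y"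
    by (auto simp: fin_def supp_def)
  show "antipode (\<lambda>N. a * x N + b * y N) = (\<lambda>N. a * antipode x N + b * antipode y N)"
    using F by (simp add: antipode_superset[OF F(1)] algebra_simps sum.distrib sum_distrib_left)
qed (rule fin_antipode)

lemma lmap_pack_antipode_mat: "lmap pack (antipode_mat (pack M)) = lmap pack (antipode_mat M)"
proof -
  have "lmap pack (antipode_mat (pack M))
      = lincomb (compositions (pack M)) (\<lambda>ys. (-1) ^ length ys) (\<lambda>ys. pack (blockdiag_list ys))"
    by (simp add: antipode_mat_def lmap_lincomb finite_compositions)
  also have "\<dots> = lincomb (compositions M) (\<lambda>xs. (-1) ^ length xs) (\<lambda>xs. pack (blockdiag_list xs))"
  proof
    fix Q
    have packed: "map (\<lambda>A. pack (restrict_nz M A)) xs = map pack xs" if "xs \<in> compositions M" for xs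
      using that mat_le_if_in_sum_decomps pack_restrict_nz by (auto simp: compositions_def)
    have "lincomb (compositions (pack M)) (\<lambda>ys. (-1) ^ length ys) (\<lambda>ys. pack (blockdiag_list ys)) Q
        = (\<Sum>xs\<in>compositions M. (-1) ^ length (map (restrict_nz M) xs)
            * delta (pack (blockdiag_list (map (restrict_nz M) xs))) Q)"
      unfolding lincomb_def by (rule sum.reindex_bij_betw[OF bij_betw_restrict_nz_compositions, symmetric])
    also have "\<dots> = lincomb (compositions M) (\<lambda>xs. (-1) ^ length xs) (\<lambda>xs. pack (blockdiag_list xs)) Q"
      unfolding lincomb_def pack_blockdiag_list length_map map_map o_def
      by (intro sum.cong refl) (simp only: packed)
    finally show "lincomb (compositions (pack M)) (\<lambda>ys. (-1) ^ length ys) (\<lambda>ys. pack (blockdiag_list ys)) Q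
        = lincomb (compositions M) (\<lambda>xs. (-1) ^ length xs) (\<lambda>xs. pack (blockdiag_list xs)) Q" .
  qed
  also have "\<dots> = lmap pack (antipode_mat M)"
    by (simp add: antipode_mat_def lmap_lincomb finite_compositions)
  finally show ?thesis .
qed

lemma antipode_Iid:
  assumes "x \<in> Iid"
  shows "antipode x \<in> Iid"
proof -
  have fin: "fin x" using assms by (simp add: Iid_iff)
  have "lmap pack (antipode x) = (\<lambda>Q. \<Sum>M\<in>supp x. x M * lmap pack (antipode_mat M) Q)"
    unfolding antipode_def using fin fin_antipode_mat by (intro lmap_sum) (auto simp: fin_def)
  also have "\<dots> = (\<lambda>_. 0)"
  proof
    fix Q
    show "(\<Sum>M\<in>supp x. x M * lmap pack (antipode_mat M) Q) = 0"
      using sum_pack_Iid[OF assms, of "\<lambda>P. lmap pack (antipode_mat P) Q"]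
      by (simp add: lmap_pack_antipode_mat)
  qed
  finally show ?thesis using fin fin_antipode by (simp add: Iid_iff)
qed

lemma supp_cop: "supp (cop x) = (\<Union>M\<in>supp x. splits M)"
  by (auto simp: supp_def cop_def splits_def split: if_splits)

lemma sum_cop:
  assumes "fin x"
  shows "(\<Sum>AB\<in>supp (cop x). cop x AB * H AB) = (\<Sum>M\<in>supp x. x M * (\<Sum>AB\<in>splits M. H AB))"
proof -
  have "(\<Sum>AB\<in>supp (cop x). cop x AB * H AB) = (\<Sum>M\<in>supp x. \<Sum>AB\<in>splits M. cop x AB * H AB)"
    unfolding supp_cop using assms finite_splits
    by (intro sum.UNION_disjoint) (auto simp: fin_def splits_def)
  also have "\<dots> = (\<Sum>M\<in>supp x. x M * (\<Sum>AB\<in>splits M. H AB))"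
    by (auto simp: cop_def splits_def sum_distrib_left intro!: sum.cong)
  finally show ?thesis .
qed

lemma convL_eq_sum:
  "fin x \<Longrightarrow> convL S x = (\<lambda>N. \<Sum>M\<in>supp x. x M * (\<Sum>(A, B)\<in>splits M. mult (S (delta A)) (delta B) N))"
  unfolding convL_def by (simp add: sum_cop split_def)

lemma convR_eq_sum:
  "fin x \<Longrightarrow> convR S x = (\<lambda>N. \<Sum>M\<in>supp x. x M * (\<Sum>(A, B)\<in>splits M. mult (delta A) (S (delta B)) N))"
  unfolding convR_def by (simp add: sum_cop split_def)

lemma mult_delta_right: "mult x (delta B) = lmap (\<lambda>M. blockdiag M B) x"
  unfolding mult_def lmap_def supp_delta by (auto simp: delta_def intro!: sum.cong)

lemma mult_delta_left: "mult (delta A) y = lmap (blockdiag A) y"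
  unfolding mult_def lmap_def supp_delta by (auto simp: delta_def intro!: sum.cong)

definition left_terms :: "mat \<Rightarrow> ((mat \<times> mat) \<times> mat list) set" where
  "left_terms M = Sigma (splits M) (\<lambda>(A, B). compositions A)"

definition right_terms :: "mat \<Rightarrow> ((mat \<times> mat) \<times> mat list) set" where
  "right_terms M = Sigma (splits M) (\<lambda>(A, B). compositions B)"

lemma finite_left_terms: "finite (left_terms M)"
  unfolding left_terms_def by (intro finite_SigmaI finite_splits) (auto simp: finite_compositions)

lemma finite_right_terms: "finite (right_terms M)"
  unfolding right_terms_def by (intro finite_SigmaI finite_splits) (auto simp: finite_compositions)

lemma convL_antipode_delta:
  "(\<lambda>N. \<Sum>(A, B)\<in>splits M. mult (antipode (delta A)) (delta B) N)
    = lincomb (left_terms M) (\<lambda>(_, xs). (-1) ^ length xs)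
        (\<lambda>((A, B), xs). blockdiag (blockdiag_list xs) B)"
proof -
  have "mult (antipode (delta A)) (delta B)
      = lincomb (compositions A) (\<lambda>xs. (-1) ^ length xs) (\<lambda>xs. blockdiag (blockdiag_list xs) B)" for A B
    by (simp add: antipode_delta antipode_mat_def mult_delta_right lmap_lincomb finite_compositions)
  then show ?thesis
    unfolding left_terms_def lincomb_def
    by (simp add: sum.Sigma finite_splits finite_compositions split_def fun_eq_iff)
qed

lemma convR_antipode_delta:
  "(\<lambda>N. \<Sum>(A, B)\<in>splits M. mult (delta A) (antipode (delta B)) N)
    = lincomb (right_terms M) (\<lambda>(_, xs). (-1) ^ length xs)
        (\<lambda>((A, B), xs). blockdiag A (blockdiag_list xs))"
proof -
  have "mult (delta A) (antipode (delta B))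
      = lincomb (compositions B) (\<lambda>xs. (-1) ^ length xs) (\<lambda>xs. blockdiag A (blockdiag_list xs))" for A B
    by (simp add: antipode_delta antipode_mat_def mult_delta_left lmap_lincomb finite_compositions)
  then show ?thesis
    unfolding right_terms_def lincomb_def
    by (simp add: sum.Sigma finite_splits finite_compositions split_def fun_eq_iff)
qed

lemma sum_cancel_bij:
  fixes f :: "'a \<Rightarrow> 'b::ab_group_add"
  assumes "finite T" "T0 \<subseteq> T" "finite C" "bij_betw h (T - T0) (C - {c})"
    and "\<And>u. u \<in> T - T0 \<Longrightarrow> f u = - g (h u)" and "sum f T0 = sum g C"
  shows "sum f T = (if c \<in> C then g c else 0)"
proof -
  have "sum f T = sum f (T - T0) + sum f T0"
    by (rule sum.subset_diff[OF assms(2,1)])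
  also have "sum f (T - T0) = (\<Sum>u\<in>T - T0. - g (h u))"
    using assms(5) by (rule sum.cong[OF refl])
  also have "\<dots> = - sum g (C - {c})"
    using sum.reindex_bij_betw[OF assms(4), of g] by (simp add: sum_negf)
  finally show ?thesis
    using assms(3,6) by (simp add: sum.remove)
qed

lemma bij_betw_snoc_left_terms:
  "bij_betw (\<lambda>((A, B), xs). xs @ [B]) (left_terms M - (\<lambda>xs. ((M, zero_mat M), xs)) ` compositions M)
    (compositions M - {[]})"
proof (rule bij_betw_byWitness[where f' = "\<lambda>ys. ((msum M (butlast ys), last ys), butlast ys)"])
  show "\<forall>u\<in>left_terms M - (\<lambda>xs. ((M, zero_mat M), xs)) ` compositions M.
      (\<lambda>ys. ((msum M (butlast ys), last ys), butlast ys)) ((\<lambda>((A, B), xs). xs @ [B]) u) = u"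
    by (auto simp: left_terms_def splits_iff msum_compositions)
  show "\<forall>ys\<in>compositions M - {[]}.
      (\<lambda>((A, B), xs). xs @ [B]) ((\<lambda>ys. ((msum M (butlast ys), last ys), butlast ys)) ys) = ys"
    by simp
  have "xs @ [B] \<in> compositions M"
    if "((A, B), xs) \<in> left_terms M" "((A, B), xs) \<notin> (\<lambda>xs. ((M, zero_mat M), xs)) ` compositions M"
    for A B xs
  proof -
    have "(A, B) \<in> splits M" "xs \<in> compositions A" "0 < weight B"
      using that splits_weight_0_right by (auto simp: left_terms_def)
    then show ?thesis
      using append_compositions singleton_compositions by blast
  qed
  then show "(\<lambda>((A, B), xs). xs @ [B]) ` (left_terms M - (\<lambda>xs. ((M, zero_mat M), xs)) ` compositions M)
      \<subseteq> compositions M - {[]}"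
    by auto
  have "((msum M (butlast ys), last ys), butlast ys) \<in> left_terms M
      \<and> ((msum M (butlast ys), last ys), butlast ys) \<notin> (\<lambda>xs. ((M, zero_mat M), xs)) ` compositions M"
    if ys: "ys \<in> compositions M" "ys \<noteq> []" for ys
  proof -
    from ys have "butlast ys @ [last ys] \<in> compositions M" by simp
    moreover have "same_shape (last ys) M" "0 < weight (last ys)"
      using ys by (auto simp: compositions_def sum_decomps_def)
    ultimately show ?thesis
      using compositions_append_split[of "butlast ys" "[last ys]" M]
      by (auto simp: left_terms_def msum_singleton)
  qed
  then show "(\<lambda>ys. ((msum M (butlast ys), last ys), butlast ys)) ` (compositions M - {[]})
      \<subseteq> left_terms M - (\<lambda>xs. ((M, zero_mat M), xs)) ` compositions M"
    by (intro image_subsetI) simp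
qed

lemma bij_betw_Cons_right_terms:
  "bij_betw (\<lambda>((A, B), xs). A # xs) (right_terms M - (\<lambda>xs. ((zero_mat M, M), xs)) ` compositions M)
    (compositions M - {[]})"
proof (rule bij_betw_byWitness[where f' = "\<lambda>ys. ((hd ys, msum M (tl ys)), tl ys)"])
  show "\<forall>u\<in>right_terms M - (\<lambda>xs. ((zero_mat M, M), xs)) ` compositions M.
      (\<lambda>ys. ((hd ys, msum M (tl ys)), tl ys)) ((\<lambda>((A, B), xs). A # xs) u) = u"
    by (auto simp: right_terms_def splits_iff msum_compositions)
  show "\<forall>ys\<in>compositions M - {[]}.
      (\<lambda>((A, B), xs). A # xs) ((\<lambda>ys. ((hd ys, msum M (tl ys)), tl ys)) ys) = ys"
    by simp
  have "A # xs \<in> compositions M"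
    if "((A, B), xs) \<in> right_terms M" "((A, B), xs) \<notin> (\<lambda>xs. ((zero_mat M, M), xs)) ` compositions M"
    for A B xs
  proof -
    have "(A, B) \<in> splits M" "xs \<in> compositions B" "0 < weight A"
      using that splits_weight_0_left by (auto simp: right_terms_def)
    then show ?thesis
      using append_compositions[of A B M "[A]" xs] singleton_compositions by simp
  qed
  then show "(\<lambda>((A, B), xs). A # xs) ` (right_terms M - (\<lambda>xs. ((zero_mat M, M), xs)) ` compositions M)
      \<subseteq> compositions M - {[]}"
    by auto
  have "((hd ys, msum M (tl ys)), tl ys) \<in> right_terms M
      \<and> ((hd ys, msum M (tl ys)), tl ys) \<notin> (\<lambda>xs. ((zero_mat M, M), xs)) ` compositions M"
    if ys: "ys \<in> compositions M" "ys \<noteq> []" for ys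
  proof -
    from ys have "[hd ys] @ tl ys \<in> compositions M" by simp
    moreover have "same_shape (hd ys) M" "0 < weight (hd ys)"
      using ys by (auto simp: compositions_def sum_decomps_def)
    ultimately show ?thesis
      using compositions_append_split[of "[hd ys]" "tl ys" M]
      by (auto simp: right_terms_def msum_singleton)
  qed
  then show "(\<lambda>ys. ((hd ys, msum M (tl ys)), tl ys)) ` (compositions M - {[]})
      \<subseteq> right_terms M - (\<lambda>xs. ((zero_mat M, M), xs)) ` compositions M"
    by (intro image_subsetI) simp
qed

lemma lmap_pack_convL_antipode_delta:
  "lmap pack (\<lambda>N. \<Sum>(A, B)\<in>splits M. mult (antipode (delta A)) (delta B) N)
    = (\<lambda>Q. (if weight M = 0 then 1 else 0) * delta emptyM Q)"
proof
  fix Q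
  define f where "f u = (case u of ((A, B), xs) \<Rightarrow>
    (-1) ^ length xs * delta (pack (blockdiag (blockdiag_list xs) B)) Q)" for u :: "(mat \<times> mat) \<times> mat list"
  define g where "g ys = (-1) ^ length ys * delta (pack (blockdiag_list ys)) Q" for ys
  have "lmap pack (\<lambda>N. \<Sum>(A, B)\<in>splits M. mult (antipode (delta A)) (delta B) N) Q = sum f (left_terms M)"
    unfolding convL_antipode_delta lmap_lincomb[OF finite_left_terms]
    by (simp add: lincomb_def f_def split_def)
  also have "\<dots> = (if [] \<in> compositions M then g [] else 0)"
  proof (rule sum_cancel_bij[OF finite_left_terms _ finite_compositions bij_betw_snoc_left_terms])
    show "(\<lambda>xs. ((M, zero_mat M), xs)) ` compositions M \<subseteq> left_terms M"
      using splits_weight_0_right[of M "zero_mat M" M] by (auto simp: left_terms_def splits_iff same_shape_def)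
    show "f u = - g ((\<lambda>((A, B), xs). xs @ [B]) u)" for u
      by (auto simp: f_def g_def blockdiag_list_snoc split: prod.splits)
    show "sum f ((\<lambda>xs. ((M, zero_mat M), xs)) ` compositions M) = sum g (compositions M)"
      by (subst sum.reindex) (auto simp: inj_on_def f_def g_def pack_blockdiag)
  qed
  also have "\<dots> = (if weight M = 0 then 1 else 0) * delta emptyM Q"
    by (simp add: compositions_Nil_iff g_def)
  finally show "lmap pack (\<lambda>N. \<Sum>(A, B)\<in>splits M. mult (antipode (delta A)) (delta B) N) Q
      = (if weight M = 0 then 1 else 0) * delta emptyM Q" .
qed

lemma lmap_pack_convR_antipode_delta:
  "lmap pack (\<lambda>N. \<Sum>(A, B)\<in>splits M. mult (delta A) (antipode (delta B)) N)
    = (\<lambda>Q. (if weight M = 0 then 1 else 0) * delta emptyM Q)"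
proof
  fix Q
  define f where "f u = (case u of ((A, B), xs) \<Rightarrow>
    (-1) ^ length xs * delta (pack (blockdiag A (blockdiag_list xs))) Q)" for u :: "(mat \<times> mat) \<times> mat list"
  define g where "g ys = (-1) ^ length ys * delta (pack (blockdiag_list ys)) Q" for ys
  have "lmap pack (\<lambda>N. \<Sum>(A, B)\<in>splits M. mult (delta A) (antipode (delta B)) N) Q = sum f (right_terms M)"
    unfolding convR_antipode_delta lmap_lincomb[OF finite_right_terms]
    by (simp add: lincomb_def f_def split_def)
  also have "\<dots> = (if [] \<in> compositions M then g [] else 0)"
  proof (rule sum_cancel_bij[OF finite_right_terms _ finite_compositions bij_betw_Cons_right_terms])
    show "(\<lambda>xs. ((zero_mat M, M), xs)) ` compositions M \<subseteq> right_terms M"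
      using splits_weight_0_left[of "zero_mat M" M M] by (auto simp: right_terms_def splits_iff same_shape_def)
    show "f u = - g ((\<lambda>((A, B), xs). A # xs) u)" for u
      by (auto simp: f_def g_def split: prod.splits)
    show "sum f ((\<lambda>xs. ((zero_mat M, M), xs)) ` compositions M) = sum g (compositions M)"
      by (subst sum.reindex) (auto simp: inj_on_def f_def g_def pack_blockdiag)
  qed
  also have "\<dots> = (if weight M = 0 then 1 else 0) * delta emptyM Q"
    by (simp add: compositions_Nil_iff g_def)
  finally show "lmap pack (\<lambda>N. \<Sum>(A, B)\<in>splits M. mult (delta A) (antipode (delta B)) N) Q
      = (if weight M = 0 then 1 else 0) * delta emptyM Q" .
qed

lemma sum_minus_counit_Iid:
  assumes "fin x" and "\<And>M. (\<lambda>N. C M N - (if weight M = 0 then 1 else 0) * delta emptyM N) \<in> Iid"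
  shows "(\<lambda>N. (\<Sum>M\<in>supp x. x M * C M N) - counit x * delta emptyM N) \<in> Iid"
proof -
  have "counit x * delta emptyM N = (\<Sum>M\<in>supp x. x M * ((if weight M = 0 then 1 else 0) * delta emptyM N))"
    for N unfolding counit_def sum_distrib_right by (intro sum.cong refl) simp
  then have "(\<lambda>N. (\<Sum>M\<in>supp x. x M * C M N) - counit x * delta emptyM N)
      = (\<lambda>N. \<Sum>M\<in>supp x. x M * (C M N - (if weight M = 0 then 1 else 0) * delta emptyM N))"
    by (simp add: sum_subtractf right_diff_distrib)
  also have "\<dots> \<in> Iid"
    using assms unfolding Iid_def by (intro lspan_sum) (auto simp: fin_def Iid_def)
  finally show ?thesis .
qed

lemma antipode_convL:
  assumes "fin x"
  shows "(\<lambda>N. convL antipode x N - counit x * delta emptyM N) \<in> Iid"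
proof -
  have "(\<lambda>N. (\<Sum>(A, B)\<in>splits M. mult (antipode (delta A)) (delta B) N)
      - (if weight M = 0 then 1 else 0) * delta emptyM N) \<in> Iid" for M
    using finite_splits
    by (subst Iid_diff_iff) (auto simp: lmap_pack_convL_antipode_delta lmap_scale_delta fin_scale
        fin_antipode fin_mult intro!: fin_sum[where c = "\<lambda>_. 1", simplified])
  then show ?thesis
    using sum_minus_counit_Iid[OF assms] by (simp add: convL_eq_sum[OF assms])
qed

lemma antipode_convR:
  assumes "fin x"
  shows "(\<lambda>N. convR antipode x N - counit x * delta emptyM N) \<in> Iid"
proof -
  have "(\<lambda>N. (\<Sum>(A, B)\<in>splits M. mult (delta A) (antipode (delta B)) N)
      - (if weight M = 0 then 1 else 0) * delta emptyM N) \<in> Iid" for M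
    using finite_splits
    by (subst Iid_diff_iff) (auto simp: lmap_pack_convR_antipode_delta lmap_scale_delta fin_scale
        fin_antipode fin_mult intro!: fin_sum[where c = "\<lambda>_. 1", simplified])
  then show ?thesis
    using sum_minus_counit_Iid[OF assms] by (simp add: convR_eq_sum[OF assms])
qed

theorem mainTheorem2:
  shows
  \<comment> \<open>I is a biideal\<close>
  "(\<forall>x y. fin x \<longrightarrow> y \<in> Iid \<longrightarrow> mult x y \<in> Iid \<and> mult y x \<in> Iid)
   \<and> (\<forall>x\<in>Iid. cop x \<in> Jid)
   \<and> (\<forall>x\<in>Iid. counit x = 0)
   \<comment> \<open>the quotient H/I is a Hopf algebra: an antipode exists (linear map on H preserving I)\<close>
   \<and> (\<exists>S. linear_map S \<and> (\<forall>x\<in>Iid. S x \<in> Iid) \<and>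
        (\<forall>x. fin x \<longrightarrow> (\<lambda>N. convL S x N - counit x * delta emptyM N) \<in> Iid
                     \<and> (\<lambda>N. convR S x N - counit x * delta emptyM N) \<in> Iid))
   \<comment> \<open>graded by the weight: I is homogeneous, product/coproduct/counit respect weight\<close>
   \<and> (\<forall>x\<in>Iid. \<forall>n. hpart n x \<in> Iid)
   \<and> (\<forall>m n x y. fin x \<longrightarrow> fin y \<longrightarrow> homog m x \<longrightarrow> homog n y \<longrightarrow> homog (m + n) (mult x y))
   \<and> (\<forall>n x A B. fin x \<longrightarrow> homog n x \<longrightarrow> cop x (A, B) \<noteq> 0 \<longrightarrow> weight A + weight B = n)
   \<and> (\<forall>n x. fin x \<longrightarrow> homog n x \<longrightarrow> 0 < n \<longrightarrow> counit x = 0)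
   \<comment> \<open>connected: the weight-0 part of H/I is spanned by the class of the unit\<close>
   \<and> (\<forall>x. fin x \<longrightarrow> homog 0 x \<longrightarrow> (\<exists>c. (\<lambda>N. x N - c * delta emptyM N) \<in> Iid))
   \<comment> \<open>the classes of packed matrices form a basis of H/I\<close>
   \<and> (\<forall>x. fin x \<longrightarrow> (\<exists>y. fin y \<and> (\<forall>M. y M \<noteq> 0 \<longrightarrow> packed M) \<and> (\<lambda>N. x N - y N) \<in> Iid))
   \<and> (\<forall>y. fin y \<longrightarrow> (\<forall>M. y M \<noteq> 0 \<longrightarrow> packed M) \<longrightarrow> y \<in> Iid \<longrightarrow> y = (\<lambda>_. 0))
   \<comment> \<open>product on packed matrices: block diagonal (again packed)\<close>
   \<and> (\<forall>P Q. packed P \<longrightarrow> packed Q \<longrightarrow> packed (blockdiag P Q)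
          \<and> mult (delta P) (delta Q) = delta (blockdiag P Q))
   \<comment> \<open>coproduct on packed matrices, modulo I \<otimes> H + H \<otimes> I\<close>
   \<and> (\<forall>P. packed P \<longrightarrow>
        (\<lambda>AB. cop (delta P) AB
              - (\<Sum>(A, B)\<in>{(A, B). same_shape A B \<and> same_shape A P \<and> madd A B = P}.
                    tens (delta (pack A)) (delta (pack B)) AB)) \<in> Jid)"
proof (intro conjI)
  show "\<forall>x y. fin x \<longrightarrow> y \<in> Iid \<longrightarrow> mult x y \<in> Iid \<and> mult y x \<in> Iid"
    using mult_Iid_right mult_Iid_left by blast
  show "\<exists>S. linear_map S \<and> (\<forall>x\<in>Iid. S x \<in> Iid) \<and>
      (\<forall>x. fin x \<longrightarrow> (\<lambda>N. convL S x N - counit x * delta emptyM N) \<in> Iid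
                   \<and> (\<lambda>N. convR S x N - counit x * delta emptyM N) \<in> Iid)"
    using linear_map_antipode antipode_Iid antipode_convL antipode_convR by blast
  show "\<forall>x. fin x \<longrightarrow> homog 0 x \<longrightarrow> (\<exists>c. (\<lambda>N. x N - c * delta emptyM N) \<in> Iid)"
    using homog_0_congruent_unit by blast
  show "\<forall>x. fin x \<longrightarrow> (\<exists>y. fin y \<and> (\<forall>M. y M \<noteq> 0 \<longrightarrow> packed M) \<and> (\<lambda>N. x N - y N) \<in> Iid)"
    using packed_representative by blast
qed (use cop_Iid counit_Iid hpart_Iid homog_mult homog_cop counit_homog packed_Iid_eq_0
    packed_blockdiag mult_delta cop_delta_packed_formula in blast)+

end
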